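(* Let $\rho_1,\rho_2,k_1,k_2,L>0$, $0<\alpha<1$ and $\eta\ge0$, and let $\mathcal{A}$ be the operator on $\mathcal{H}$ described in the context. (a) If $\eta=0$, then $i\lambda I-\mathcal{A}:\mathcal{D}(\mathcal{A})\to\mathcal{H}$ is surjective for every real $\lambda\neq0$. (b) If $\eta>0$, then $i\lambda I-\mathcal{A}:\mathcal{D}(\mathcal{A})\to\mathcal{H}$ is surjective for every $\lambda\in\mathbb{R}$.
   Context: Set $\mu(\xi)=|\xi|^{(2\alpha-1)/2}$ for $\xi\in\mathbb{R}$ and $\mathfrak{C}=\pi^{-1}\sin(\alpha\pi)$. All function spaces are complex. Let $\mathbb{H}^1_0=\{(u,v)\in H^1(-L,0)\times H^1(0,L):\ u(-L)=v(L)=0,\ u(0)=v(0)\}$, $\mathbb{L}^2=L^2(-L,0)\times L^2(0,L)$, and $\mathcal{H}=\mathbb{H}^1_0\times\mathbb{L}^2\times L^2(\mathbb{R};\mathbb{L}^2)$, whose elements are written $\mathbb{U}=(u,v,U,V,\varphi_1,\varphi_2)$ with $(u,v)\in\mathbb{H}^1_0$, $(U,V)\in\mathbb{L}^2$, $\varphi_1\in L^2(\mathbb{R};L^2(-L,0))$, $\varphi_2\in L^2(\mathbb{R};L^2(0,L))$ (functions of $(x,\xi)$). $\mathcal{H}$ is a Hilbert space with inner product $\langle\mathbb{U},\tilde{\mathbb{U}}\rangle_{\mathcal H}=\rho_1\int_{-L}^0U\overline{\tilde U}dx+\rho_2\int_0^LV\overline{\tilde V}dx+k_1\int_{-L}^0u_x\overline{\tilde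 u_x}dx+k_2\int_0^Lv_x\overline{\tilde v_x}dx+\mathfrak{C}\int_{\mathbb R}\int_{-L}^0\varphi_1\overline{\tilde\varphi_1}\,dx\,d\xi+\mathfrak{C}\int_{\mathbb R}\int_0^L\varphi_2\overline{\tilde\varphi_2}\,dx\,d\xi$. The domain $\mathcal{D}(\mathcal{A})$ is the set of $\mathbb{U}=(u,v,U,V,\varphi_1,\varphi_2)\in\mathcal{H}$ such that $(U,V)\in\mathbb{H}^1_0$, $u\in H^2(-L,0)$, $v\in H^2(0,L)$, $k_1u_x(0)=k_2v_x(0)$, $|\xi|\varphi_1\in L^2(\mathbb{R};L^2(-L,0))$, $-(|\xi|^2+\eta)\varphi_1+\mu(\xi)U\in L^2(\mathbb{R};L^2(-L,0))$, $|\xi|\varphi_2\in L^2(\mathbb{R};L^2(0,L))$, $-(|\xi|^2+\eta)\varphi_2+\mu(\xi)V\in L^2(\mathbb{R};L^2(0,L))$; and $$\mathcal{A}\mathbb{U}=\Big(U,\ V,\ \tfrac{1}{\rho_1}\big[k_1u_{xx}-\mathfrak{C}\textstyle\int_{\mathbb R}\mu(\xi)\varphi_1(\cdot,\xi)d\xi\big],\ \tfrac{1}{\rho_2}\big[k_2v_{xx}-\mathfrak{C}\textstyle\int_{\mathbb R}\mu(\xi)\varphi_2(\cdot,\xi)d\xi\big],\ -(|\xi|^2+\eta)\varphi_1+\mu(\xi)U,\ -(|\xi|^2+\eta)\varphi_2+\mu(\xi)V\Big).$$ *)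

theory Defs
  imports "HOL-Analysis.Analysis"
begin

definition L2 :: "real set \<Rightarrow> (real \<Rightarrow> complex) \<Rightarrow> bool" where
  "L2 S f \<longleftrightarrow> f \<in> borel_measurable (lebesgue_on S) \<and>
     integrable (lebesgue_on S) (\<lambda>x. (cmod (f x))^2)"

text \<open>L2(R; L2(S)) identified with L2(S x R); a function phi x xi (space variable x, then xi).\<close>
definition L2R :: "real set \<Rightarrow> (real \<Rightarrow> real \<Rightarrow> complex) \<Rightarrow> bool" where
  "L2R S \<phi> \<longleftrightarrow> (\<lambda>p. \<phi> (fst p) (snd p)) \<in> borel_measurable (lebesgue_on (S \<times> UNIV)) \<and>
     integrable (lebesgue_on (S \<times> UNIV)) (\<lambda>p. (cmod (\<phi> (fst p) (snd p)))^2)"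

text \<open>u (continuous representative on [a,b]) belongs to H^1(a,b) with (weak) derivative g in L2.\<close>
definition has_weak_deriv :: "real \<Rightarrow> real \<Rightarrow> (real \<Rightarrow> complex) \<Rightarrow> (real \<Rightarrow> complex) \<Rightarrow> bool" where
  "has_weak_deriv a b u g \<longleftrightarrow> L2 {a..b} g \<and>
     (\<forall>x\<in>{a..b}. u x = u a + integral\<^sup>L (lebesgue_on {a..x}) g)"

definition H1 :: "real \<Rightarrow> real \<Rightarrow> (real \<Rightarrow> complex) \<Rightarrow> bool" where
  "H1 a b u \<longleftrightarrow> L2 {a..b} u \<and> (\<exists>g. has_weak_deriv a b u g)"

definition H10 :: "real \<Rightarrow> (real \<Rightarrow> complex) \<Rightarrow> (real \<Rightarrow> complex) \<Rightarrow> bool" where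
  "H10 L u v \<longleftrightarrow> H1 (-L) 0 u \<and> H1 0 L v \<and> u (-L) = 0 \<and> v L = 0 \<and> u 0 = v 0"

definition mu :: "real \<Rightarrow> real \<Rightarrow> real" where
  "mu \<alpha> \<xi> = \<bar>\<xi>\<bar> powr ((2 * \<alpha> - 1) / 2)"

definition Cfrak :: "real \<Rightarrow> real" where
  "Cfrak \<alpha> = sin (\<alpha> * pi) / pi"

definition in_H :: "real \<Rightarrow> (real \<Rightarrow> complex) \<Rightarrow> (real \<Rightarrow> complex) \<Rightarrow> (real \<Rightarrow> complex) \<Rightarrow>
    (real \<Rightarrow> complex) \<Rightarrow> (real \<Rightarrow> real \<Rightarrow> complex) \<Rightarrow> (real \<Rightarrow> real \<Rightarrow> complex) \<Rightarrow> bool" where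
  "in_H L u v U V \<phi>1 \<phi>2 \<longleftrightarrow> H10 L u v \<and> L2 {-L..0} U \<and> L2 {0..L} V \<and>
     L2R {-L..0} \<phi>1 \<and> L2R {0..L} \<phi>2"

text \<open>The resolvent equation  (i lambda I - A) W = F  with W in D(A) and F in H, where
  g1,h1 (resp. g2,h2) are the first and second derivatives of u (resp. v), the first
  derivative being taken as its continuous representative.  Equalities in H are
  understood almost everywhere (pointwise for the H^1 components, which are continuous).\<close>
definition resolvent_solution ::
  "real \<Rightarrow> real \<Rightarrow> real \<Rightarrow> real \<Rightarrow> real \<Rightarrow> real \<Rightarrow> real \<Rightarrow> real \<Rightarrow>
   (real \<Rightarrow> complex) \<Rightarrow> (real \<Rightarrow> complex) \<Rightarrow> (real \<Rightarrow> complex) \<Rightarrow> (real \<Rightarrow> complex) \<Rightarrow>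
   (real \<Rightarrow> real \<Rightarrow> complex) \<Rightarrow> (real \<Rightarrow> real \<Rightarrow> complex) \<Rightarrow>
   (real \<Rightarrow> complex) \<Rightarrow> (real \<Rightarrow> complex) \<Rightarrow> (real \<Rightarrow> complex) \<Rightarrow> (real \<Rightarrow> complex) \<Rightarrow>
   (real \<Rightarrow> real \<Rightarrow> complex) \<Rightarrow> (real \<Rightarrow> real \<Rightarrow> complex) \<Rightarrow> bool" where
  "resolvent_solution \<rho>1 \<rho>2 k1 k2 L \<alpha> \<eta> lam f1 f2 f3 f4 f5 f6 u v U V \<phi>1 \<phi>2 \<longleftrightarrow>
    in_H L u v U V \<phi>1 \<phi>2 \<and>
    \<comment> \<open>domain conditions\<close>
    H10 L U V \<and>
    (\<exists>g1 h1 g2 h2.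
       has_weak_deriv (-L) 0 u g1 \<and> has_weak_deriv (-L) 0 g1 h1 \<and>
       has_weak_deriv 0 L v g2 \<and> has_weak_deriv 0 L g2 h2 \<and>
       of_real k1 * g1 0 = of_real k2 * g2 0 \<and>
       L2R {-L..0} (\<lambda>x \<xi>. of_real \<bar>\<xi>\<bar> * \<phi>1 x \<xi>) \<and>
       L2R {-L..0} (\<lambda>x \<xi>. - of_real (\<xi>^2 + \<eta>) * \<phi>1 x \<xi> + of_real (mu \<alpha> \<xi>) * U x) \<and>
       L2R {0..L} (\<lambda>x \<xi>. of_real \<bar>\<xi>\<bar> * \<phi>2 x \<xi>) \<and>
       L2R {0..L} (\<lambda>x \<xi>. - of_real (\<xi>^2 + \<eta>) * \<phi>2 x \<xi> + of_real (mu \<alpha> \<xi>) * V x) \<and>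
    \<comment> \<open>the equations (i lambda - A) W = F\<close>
       (\<forall>x\<in>{-L..0}. \<i> * of_real lam * u x - U x = f1 x) \<and>
       (\<forall>x\<in>{0..L}. \<i> * of_real lam * v x - V x = f2 x) \<and>
       (AE x in lebesgue_on {-L..0}. \<i> * of_real lam * U x
          - (of_real k1 * h1 x - of_real (Cfrak \<alpha>) *
               integral\<^sup>L lebesgue (\<lambda>\<xi>. of_real (mu \<alpha> \<xi>) * \<phi>1 x \<xi>)) / of_real \<rho>1 = f3 x) \<and>
       (AE x in lebesgue_on {0..L}. \<i> * of_real lam * V x
          - (of_real k2 * h2 x - of_real (Cfrak \<alpha>) *
               integral\<^sup>L lebesgue (\<lambda>\<xi>. of_real (mu \<alpha> \<xi>) * \<phi>2 x \<xi>)) / of_real \<rho>2 = f4 x) \<and>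
       (AE p in lebesgue_on ({-L..0} \<times> UNIV). \<i> * of_real lam * \<phi>1 (fst p) (snd p)
          - (- of_real ((snd p)^2 + \<eta>) * \<phi>1 (fst p) (snd p) + of_real (mu \<alpha> (snd p)) * U (fst p))
          = f5 (fst p) (snd p)) \<and>
       (AE p in lebesgue_on ({0..L} \<times> UNIV). \<i> * of_real lam * \<phi>2 (fst p) (snd p)
          - (- of_real ((snd p)^2 + \<eta>) * \<phi>2 (fst p) (snd p) + of_real (mu \<alpha> (snd p)) * V (fst p))
          = f6 (fst p) (snd p)))"

definition resolvent_surjective :: "real \<Rightarrow> real \<Rightarrow> real \<Rightarrow> real \<Rightarrow> real \<Rightarrow> real \<Rightarrow> real \<Rightarrow> real \<Rightarrow> bool" where
  "resolvent_surjective \<rho>1 \<rho>2 k1 k2 L \<alpha> \<eta> lam \<longleftrightarrow>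
    (\<forall>f1 f2 f3 f4 f5 f6. in_H L f1 f2 f3 f4 f5 f6 \<longrightarrow>
      (\<exists>u v U V \<phi>1 \<phi>2. resolvent_solution \<rho>1 \<rho>2 k1 k2 L \<alpha> \<eta> lam f1 f2 f3 f4 f5 f6 u v U V \<phi>1 \<phi>2))"

end

theory Submission
  imports Defs
begin

text \<open>
  For given data, the last two components of \<open>(i\<lambda> - \<A>) W = F\<close> are solved pointwise in \<open>\<xi>\<close> by
  \<open>\<phi> = (f + \<mu> U) / (i\<lambda> + \<xi>\<^sup>2 + \<eta>)\<close> with \<open>U = i\<lambda> u - f\<^sub>1\<close>, so that the memory term
  \<open>\<integral> \<mu> \<phi> d\<xi>\<close> becomes \<open>\<integral> f \<mu> / (i\<lambda> + \<xi>\<^sup>2 + \<eta>) d\<xi> + m U\<close> with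
  \<open>m = \<integral> \<mu>\<^sup>2 / (i\<lambda> + \<xi>\<^sup>2 + \<eta>) d\<xi>\<close>. Each string equation then reads \<open>u'' = a u + r\<close> with
  \<open>r \<in> L\<^sup>2\<close> and \<open>a = i\<lambda> (i\<lambda> \<rho> + C m) / k\<close>, and together with \<open>u(-L) = v(L) = 0\<close> and the
  transmission conditions at \<open>0\<close> this boundary value problem is solved explicitly by means of
  \<open>cosh (\<surd>a x)\<close> and \<open>sinh (\<surd>a x) / \<surd>a\<close>. Its determinant does not vanish: either
  \<open>\<lambda> = 0\<close> and \<open>a = 0\<close> on both strings, or \<open>Im (k a) = \<lambda> C Re m\<close> is the same nonzero number on
  both strings (\<open>Re m > 0\<close>), and then the energy identity rules out a nontrivial homogeneous
  solution. The hypothesis \<open>\<lambda> \<noteq> 0 \<or> \<eta> > 0\<close> keeps \<open>i\<lambda> + \<xi>\<^sup>2 + \<eta>\<close> away from \<open>0\<close>, and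
  \<open>0 < \<alpha> < 1\<close> makes all \<open>\<xi>\<close>-integrals converge.
\<close>

section \<open>Square-integrable functions on an interval\<close>

lemma le_one_plus_square: "(t::real) \<le> 1 + t\<^sup>2"
proof -
  have "0 \<le> (t - 1/2)\<^sup>2 + 3/4" by simp
  also have "\<dots> = 1 + t\<^sup>2 - t" by (simp add: power2_eq_square algebra_simps)
  finally show ?thesis by simp
qed

lemma norm_add_square_le:
  fixes a b :: "'a::real_normed_vector"
  shows "(norm (a + b))\<^sup>2 \<le> 2 * (norm a)\<^sup>2 + 2 * (norm b)\<^sup>2"
proof -
  have "(norm (a + b))\<^sup>2 \<le> (norm a + norm b)\<^sup>2"
    by (rule power_mono[OF norm_triangle_ineq]) simp
  also have "\<dots> \<le> 2 * (norm a)\<^sup>2 + 2 * (norm b)\<^sup>2"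
    using zero_le_power2[of "norm a - norm b"] by (simp add: power2_eq_square algebra_simps)
  finally show ?thesis .
qed

lemma L2_imp_absolutely_integrable:
  fixes f :: "real \<Rightarrow> complex"
  assumes "L2 {a..b} f"
  shows "f absolutely_integrable_on {a..b}"
proof -
  interpret finite_measure "lebesgue_on {a..b}" by (rule finite_measure_lebesgue_on) simp
  have "integrable (lebesgue_on {a..b}) f"
  proof (rule Bochner_Integration.integrable_bound)
    show "integrable (lebesgue_on {a..b}) (\<lambda>x. 1 + (cmod (f x))\<^sup>2)"
      using assms by (auto simp: L2_def)
    show "f \<in> borel_measurable (lebesgue_on {a..b})"
      using assms by (simp add: L2_def)
    show "AE x in lebesgue_on {a..b}. norm (f x) \<le> norm (1 + (cmod (f x))\<^sup>2)"
      using le_one_plus_square by (auto intro!: AE_I2)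
  qed
  then show ?thesis by (simp add: integrable_restrict_space set_integrable_def)
qed

lemma L2_add:
  fixes f g :: "real \<Rightarrow> complex"
  assumes f: "L2 S f" and g: "L2 S g"
  shows "L2 S (\<lambda>x. f x + g x)"
  unfolding L2_def
proof
  have [measurable]: "f \<in> borel_measurable (lebesgue_on S)" "g \<in> borel_measurable (lebesgue_on S)"
    using f g by (auto simp: L2_def)
  show "(\<lambda>x. f x + g x) \<in> borel_measurable (lebesgue_on S)" by measurable
  show "integrable (lebesgue_on S) (\<lambda>x. (cmod (f x + g x))\<^sup>2)"
  proof (rule Bochner_Integration.integrable_bound)
    show "integrable (lebesgue_on S) (\<lambda>x. 2 * (cmod (f x))\<^sup>2 + 2 * (cmod (g x))\<^sup>2)"
      using f g unfolding L2_def by (intro Bochner_Integration.integrable_add integrable_mult_right) auto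
  qed (use norm_add_square_le in \<open>auto intro!: AE_I2\<close>)
qed

lemma L2_cmult:
  fixes f :: "real \<Rightarrow> complex"
  assumes f: "L2 S f"
  shows "L2 S (\<lambda>x. c * f x)"
  unfolding L2_def
proof
  have [measurable]: "f \<in> borel_measurable (lebesgue_on S)" using f by (auto simp: L2_def)
  show "(\<lambda>x. c * f x) \<in> borel_measurable (lebesgue_on S)" by measurable
  have "integrable (lebesgue_on S) (\<lambda>x. (cmod c)\<^sup>2 * (cmod (f x))\<^sup>2)"
    using f unfolding L2_def by (intro integrable_mult_right) auto
  then show "integrable (lebesgue_on S) (\<lambda>x. (cmod (c * f x))\<^sup>2)"
    by (simp add: norm_mult power_mult_distrib)
qed

lemma L2_diff:
  fixes f g :: "real \<Rightarrow> complex"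
  assumes "L2 S f" "L2 S g"
  shows "L2 S (\<lambda>x. f x - g x)"
  using L2_add[OF assms(1) L2_cmult[OF assms(2), of "-1"]] by simp

lemma L2_if_continuous_on:
  fixes f :: "real \<Rightarrow> complex"
  assumes "continuous_on {a..b} f"
  shows "L2 {a..b} f"
  unfolding L2_def
proof
  show "f \<in> borel_measurable (lebesgue_on {a..b})"
    by (rule continuous_imp_measurable_on_sets_lebesgue[OF assms]) simp
  have "(\<lambda>x. (cmod (f x))\<^sup>2) absolutely_integrable_on {a..b}"
    by (intro absolutely_integrable_continuous_real continuous_intros assms)
  then show "integrable (lebesgue_on {a..b}) (\<lambda>x. (cmod (f x))\<^sup>2)"
    by (simp add: integrable_restrict_space set_integrable_def)
qed

section \<open>Absolutely continuous functions\<close>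

lemma set_integrable_lborel_if_absolutely_integrable:
  fixes f :: "real \<Rightarrow> 'a::euclidean_space"
  assumes "f absolutely_integrable_on S" "f \<in> borel_measurable lborel" "S \<in> sets borel"
  shows "set_integrable lborel S f"
proof -
  have "(\<lambda>x. indicator S x *\<^sub>R f x) \<in> borel_measurable lborel"
    using assms(2,3) by measurable
  then show ?thesis
    using assms(1) unfolding set_integrable_def by (simp add: integrable_completion)
qed

lemma absolutely_integrable_continuous_mult:
  fixes P \<alpha> :: "real \<Rightarrow> complex"
  assumes "continuous_on {a..b} P" "\<alpha> absolutely_integrable_on {a..b}"
  shows "(\<lambda>t. P t * \<alpha> t) absolutely_integrable_on {a..b}"
proof (rule absolutely_integrable_bounded_measurable_product[OF bilinear_times])
  show "P \<in> borel_measurable (lebesgue_on {a..b})"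
    by (rule continuous_imp_measurable_on_sets_lebesgue[OF assms(1)]) auto
  show "bounded (P ` {a..b})"
    by (rule compact_imp_bounded[OF compact_continuous_image[OF assms(1) compact_Icc]])
qed (use assms in auto)

lemma completion_ex_borel_measurable_complex:
  fixes f :: "'a \<Rightarrow> complex"
  assumes f: "f \<in> borel_measurable (completion M)"
  shows "\<exists>g\<in>borel_measurable M. AE x in M. f x = g x"
proof -
  have "(\<lambda>x. Re (f x)) \<in> borel_measurable (completion M)" "(\<lambda>x. Im (f x)) \<in> borel_measurable (completion M)"
    using f by (simp_all add: borel_measurable_complex_iff)
  then obtain g1 g2 where g1: "g1 \<in> borel_measurable M" "AE x in M. Re (f x) = g1 x"
    and g2: "g2 \<in> borel_measurable M" "AE x in M. Im (f x) = g2 x"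
    by (metis completion_ex_borel_measurable_real)
  have "AE x in M. f x = Complex (g1 x) (g2 x)"
    using g1(2) g2(2) by eventually_elim (simp add: complex_eq_iff)
  moreover have "(\<lambda>x. Complex (g1 x) (g2 x)) \<in> borel_measurable M"
    using g1(1) g2(1) by (simp add: borel_measurable_complex_iff)
  ultimately show ?thesis by (rule bexI)
qed

lemma absolutely_integrable_borel_representative:
  fixes f :: "real \<Rightarrow> complex"
  assumes "f absolutely_integrable_on S"
  obtains g where "g \<in> borel_measurable lborel" "negligible {x\<in>S. f x \<noteq> g x}"
proof -
  have "(\<lambda>x. indicator S x *\<^sub>R f x) \<in> borel_measurable lebesgue"
    using assms unfolding set_integrable_def by (rule borel_measurable_integrable)
  then obtain g where g: "g \<in> borel_measurable lborel" and "AE x in lborel. indicator S x *\<^sub>R f x = g x"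
    by (metis completion_ex_borel_measurable_complex)
  then have "AE x in lebesgue. indicator S x *\<^sub>R f x = g x" by (intro AE_completion)
  then obtain N where N: "{x \<in> space lebesgue. \<not> indicator S x *\<^sub>R f x = g x} \<subseteq> N"
    "emeasure lebesgue N = 0" "N \<in> sets lebesgue"
    by (rule AE_E)
  have "negligible {x\<in>S. f x \<noteq> g x}"
    by (rule negligible_subset[of N]) (use N in \<open>auto simp: negligible_iff_null_sets null_sets_def\<close>)
  with g that show ?thesis by blast
qed

definition has_ac_deriv :: "real \<Rightarrow> real \<Rightarrow> (real \<Rightarrow> complex) \<Rightarrow> (real \<Rightarrow> complex) \<Rightarrow> bool" where
  "has_ac_deriv a b u g \<longleftrightarrow>
     g absolutely_integrable_on {a..b} \<and> (\<forall>x\<in>{a..b}. u x = u a + integral {a..x} g)"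

lemma has_ac_deriv_integrable_on:
  assumes "has_ac_deriv a b u g" "x \<in> {a..b}"
  shows "g integrable_on {a..x}"
proof -
  have "g absolutely_integrable_on {a..x}"
    using assms absolutely_integrable_on_subinterval unfolding has_ac_deriv_def by fastforce
  then show ?thesis by (rule set_lebesgue_integral_eq_integral(1))
qed

lemma has_weak_deriv_iff: "has_weak_deriv a b u g \<longleftrightarrow> L2 {a..b} g \<and> has_ac_deriv a b u g"
proof -
  have "integral\<^sup>L (lebesgue_on {a..x}) g = integral {a..x} g"
    if "g absolutely_integrable_on {a..b}" "x \<in> {a..b}" for x
  proof -
    have "g absolutely_integrable_on {a..x}"
      using that absolutely_integrable_on_subinterval by fastforce
    then show ?thesis
      by (simp add: integral_restrict_space set_lebesgue_integral_def
          set_lebesgue_integral_eq_integral(2)[symmetric])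
  qed
  then show ?thesis
    unfolding has_weak_deriv_def has_ac_deriv_def using L2_imp_absolutely_integrable by auto
qed

lemma continuous_on_if_has_ac_deriv:
  assumes "has_ac_deriv a b u g"
  shows "continuous_on {a..b} u"
proof -
  have "g integrable_on {a..b}"
    using assms unfolding has_ac_deriv_def by (blast intro: set_lebesgue_integral_eq_integral(1))
  then have "continuous_on {a..b} (\<lambda>x. u a + integral {a..x} g)"
    by (intro continuous_intros indefinite_integral_continuous_1)
  moreover have "\<And>x. x \<in> {a..b} \<Longrightarrow> u a + integral {a..x} g = u x"
    using assms unfolding has_ac_deriv_def by (metis (no_types))
  ultimately show ?thesis by (rule continuous_on_eq)
qed

lemma has_ac_deriv_indefinite_integral:
  "g absolutely_integrable_on {a..b} \<Longrightarrow> has_ac_deriv a b (\<lambda>x. integral {a..x} g) g"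
  unfolding has_ac_deriv_def by simp

lemma has_ac_deriv_add:
  assumes u: "has_ac_deriv a b u g" and v: "has_ac_deriv a b v h"
  shows "has_ac_deriv a b (\<lambda>x. u x + v x) (\<lambda>x. g x + h x)"
  unfolding has_ac_deriv_def
proof
  show "(\<lambda>x. g x + h x) absolutely_integrable_on {a..b}"
    using u v unfolding has_ac_deriv_def by (blast intro: set_integral_add(1))
  show "\<forall>x\<in>{a..b}. u x + v x = u a + v a + integral {a..x} (\<lambda>x. g x + h x)"
  proof
    fix x assume x: "x \<in> {a..b}"
    have "u x = u a + integral {a..x} g" "v x = v a + integral {a..x} h"
      using u v x unfolding has_ac_deriv_def by blast+
    then show "u x + v x = u a + v a + integral {a..x} (\<lambda>x. g x + h x)"
      using integral_add[OF has_ac_deriv_integrable_on[OF u x] has_ac_deriv_integrable_on[OF v x]]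
      by simp
  qed
qed

lemma has_ac_deriv_cmult:
  assumes "has_ac_deriv a b u g"
  shows "has_ac_deriv a b (\<lambda>x. c * u x) (\<lambda>x. c * g x)"
  unfolding has_ac_deriv_def
proof
  show "(\<lambda>x. c * g x) absolutely_integrable_on {a..b}"
    using assms unfolding has_ac_deriv_def by (blast intro: set_integrable_mult_right)
  show "\<forall>x\<in>{a..b}. c * u x = c * u a + integral {a..x} (\<lambda>x. c * g x)"
  proof
    fix x assume "x \<in> {a..b}"
    then have "u x = u a + integral {a..x} g" using assms unfolding has_ac_deriv_def by blast
    then show "c * u x = c * u a + integral {a..x} (\<lambda>x. c * g x)"
      by (simp add: distrib_left)
  qed
qed

lemma has_ac_deriv_diff:
  assumes "has_ac_deriv a b u g" "has_ac_deriv a b v h"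
  shows "has_ac_deriv a b (\<lambda>x. u x - v x) (\<lambda>x. g x - h x)"
  using has_ac_deriv_add[OF assms(1) has_ac_deriv_cmult[OF assms(2), of "-1"]] by simp

lemma has_ac_deriv_cong:
  assumes "has_ac_deriv a b u g"
    and uv: "\<And>x. x \<in> {a..b} \<Longrightarrow> u x = v x" and gh: "\<And>x. x \<in> {a..b} \<Longrightarrow> g x = h x"
  shows "has_ac_deriv a b v h"
  unfolding has_ac_deriv_def
proof
  show "h absolutely_integrable_on {a..b}"
    using assms(1) gh unfolding has_ac_deriv_def
    by (auto intro: absolutely_integrable_spike[OF _ negligible_empty])
  show "\<forall>x\<in>{a..b}. v x = v a + integral {a..x} h"
  proof
    fix x assume x: "x \<in> {a..b}"
    then have "integral {a..x} g = integral {a..x} h"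
      by (intro integral_cong) (use gh in auto)
    moreover have "u x = u a + integral {a..x} g" using assms(1) x unfolding has_ac_deriv_def by blast
    moreover have "u x = v x" "u a = v a" using uv x by auto
    ultimately show "v x = v a + integral {a..x} h" by simp
  qed
qed

lemma has_ac_deriv_if_C1:
  assumes P: "\<And>t. (P has_vector_derivative P' t) (at t)" and P': "continuous_on UNIV P'"
  shows "has_ac_deriv a b P P'"
  unfolding has_ac_deriv_def
proof
  show "P' absolutely_integrable_on {a..b}"
    using absolutely_integrable_continuous[OF continuous_on_subset[OF P']] by auto
  show "\<forall>x\<in>{a..b}. P x = P a + integral {a..x} P'"
  proof
    fix x assume "x \<in> {a..b}"
    then have "(P' has_integral P x - P a) {a..x}"
      by (intro fundamental_theorem_of_calculus) (auto intro: has_vector_derivative_at_within P)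
    then show "P x = P a + integral {a..x} P'" by (simp add: integral_unique)
  qed
qed

lemma (in pair_sigma_finite) integrable_tensor_product:
  fixes f :: "'a \<Rightarrow> real" and g :: "'b \<Rightarrow> real"
  assumes f: "integrable M1 f" and g: "integrable M2 g"
  shows "integrable (M1 \<Otimes>\<^sub>M M2) (\<lambda>p. f (fst p) * g (snd p))"
proof (rule integrableI_bounded)
  have [measurable]: "f \<in> borel_measurable M1" "g \<in> borel_measurable M2"
    using f g by auto
  show "(\<lambda>p. f (fst p) * g (snd p)) \<in> borel_measurable (M1 \<Otimes>\<^sub>M M2)" by measurable
  have "(\<integral>\<^sup>+ p. ennreal (norm (f (fst p) * g (snd p))) \<partial>(M1 \<Otimes>\<^sub>M M2))
      = (\<integral>\<^sup>+ x. \<integral>\<^sup>+ y. ennreal (norm (f x)) * ennreal (norm (g y)) \<partial>M2 \<partial>M1)"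
    by (subst M2.nn_integral_fst[symmetric]) (auto simp: case_prod_beta abs_mult ennreal_mult)
  also have "\<dots> = (\<integral>\<^sup>+ x. ennreal (norm (f x)) \<partial>M1) * (\<integral>\<^sup>+ y. ennreal (norm (g y)) \<partial>M2)"
    by (simp add: nn_integral_cmult nn_integral_multc)
  also have "\<dots> < \<infinity>"
    using f g by (simp add: integrable_iff_bounded ennreal_mult_less_top)
  finally show "(\<integral>\<^sup>+ p. ennreal (norm (f (fst p) * g (snd p))) \<partial>(M1 \<Otimes>\<^sub>M M2)) < \<infinity>" .
qed

lemma integrable_triangle_product:
  fixes Q \<alpha> :: "real \<Rightarrow> complex"
  assumes Q: "continuous_on UNIV Q" and \<alpha>m: "\<alpha> \<in> borel_measurable lborel"
    and \<alpha>l: "set_integrable lborel {a..x} \<alpha>"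
  shows "integrable (lborel \<Otimes>\<^sub>M lborel) (\<lambda>(s, t). if a \<le> s \<and> s \<le> t \<and> t \<le> x then Q s * \<alpha> t else 0)"
proof -
  have [measurable]: "Q \<in> borel_measurable lborel"
    using borel_measurable_continuous_onI[OF Q] by (simp add: measurable_lborel2)
  note [measurable] = \<alpha>m
  obtain M where M: "\<And>s. s \<in> {a..x} \<Longrightarrow> norm (Q s) \<le> M"
    using compact_imp_bounded[OF compact_continuous_image[OF continuous_on_subset[OF Q] compact_Icc]]
    unfolding bounded_iff by blast
  have "integrable (lborel \<Otimes>\<^sub>M lborel)
      (\<lambda>p. (\<bar>M\<bar> * indicator {a..x} (fst p)) * norm (indicator {a..x} (snd p) *\<^sub>R \<alpha> (snd p)))"
    using \<alpha>l unfolding set_integrable_def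
    by (intro lborel_pair.integrable_tensor_product integrable_norm integrable_mult_right integrable_real_indicator)
       (auto simp: emeasure_lborel_Icc_eq)
  then show ?thesis
  proof (rule Bochner_Integration.integrable_bound)
    show "(\<lambda>(s, t). if a \<le> s \<and> s \<le> t \<and> t \<le> x then Q s * \<alpha> t else 0) \<in> borel_measurable (lborel \<Otimes>\<^sub>M lborel)"
      unfolding case_prod_beta by measurable
    have "norm (if a \<le> s \<and> s \<le> t \<and> t \<le> x then Q s * \<alpha> t else 0)
        \<le> \<bar>M\<bar> * indicator {a..x} s * norm (indicator {a..x} t *\<^sub>R \<alpha> t)" for s t
      using M[of s] by (auto simp: norm_mult intro!: mult_right_mono)
    then show "AE p in lborel \<Otimes>\<^sub>M lborel. norm (case p of (s, t) \<Rightarrow> if a \<le> s \<and> s \<le> t \<and> t \<le> x then Q s * \<alpha> t else 0)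
        \<le> norm (\<bar>M\<bar> * indicator {a..x} (fst p) * norm (indicator {a..x} (snd p) *\<^sub>R \<alpha> (snd p)))"
      by (auto simp: abs_mult)
  qed
qed

lemma integral_triangle_swap:
  fixes Q \<alpha> :: "real \<Rightarrow> complex"
  assumes Q: "continuous_on UNIV Q" and \<alpha>m: "\<alpha> \<in> borel_measurable lborel"
    and \<alpha>i: "\<alpha> absolutely_integrable_on {a..x}"
  shows "integral {a..x} (\<lambda>s. Q s * integral {s..x} \<alpha>) = integral {a..x} (\<lambda>t. integral {a..t} Q * \<alpha> t)"
proof -
  have \<alpha>l: "set_integrable lborel {a..x} \<alpha>"
    by (rule set_integrable_lborel_if_absolutely_integrable[OF \<alpha>i \<alpha>m]) simp
  define h where "h s t = (if a \<le> s \<and> s \<le> t \<and> t \<le> x then Q s * \<alpha> t else 0)" for s t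
  have h: "integrable (lborel \<Otimes>\<^sub>M lborel) (\<lambda>(s, t). h s t)"
    unfolding h_def by (rule integrable_triangle_product[OF Q \<alpha>m \<alpha>l])
  have inner_s: "(LBINT s. h s t) = indicator {a..x} t *\<^sub>R (integral {a..t} Q * \<alpha> t)" for t
  proof (cases "a \<le> t \<and> t \<le> x")
    case True
    have "(LBINT s. h s t) = (LBINT s. (indicator {a..t} s *\<^sub>R Q s) * \<alpha> t)"
      using True by (intro Bochner_Integration.integral_cong) (auto simp: h_def indicator_def)
    also have "\<dots> = (LBINT s. indicator {a..t} s *\<^sub>R Q s) * \<alpha> t"
      by (rule integral_mult_left_zero)
    also have "(LBINT s. indicator {a..t} s *\<^sub>R Q s) = integral {a..t} Q"
      using set_borel_integral_eq_integral(2)[OF borel_integrable_atLeastAtMost'[OF continuous_on_subset[OF Q]]]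
      by (simp add: set_lebesgue_integral_def)
    finally show ?thesis using True by simp
  next
    case False
    then have "h s t = 0" for s by (auto simp: h_def)
    then show ?thesis using False by simp
  qed
  have inner_t: "(LBINT t. h s t) = indicator {a..x} s *\<^sub>R (Q s * integral {s..x} \<alpha>)" for s
  proof (cases "a \<le> s \<and> s \<le> x")
    case True
    have "(LBINT t. h s t) = (LBINT t. Q s * (indicator {s..x} t *\<^sub>R \<alpha> t))"
      using True by (intro Bochner_Integration.integral_cong) (auto simp: h_def indicator_def)
    also have "\<dots> = Q s * (LBINT t. indicator {s..x} t *\<^sub>R \<alpha> t)"
      by (rule integral_mult_right_zero)
    also have "(LBINT t. indicator {s..x} t *\<^sub>R \<alpha> t) = integral {s..x} \<alpha>"
      using set_borel_integral_eq_integral(2)[OF set_integrable_subset[OF \<alpha>l]] True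
      by (simp add: set_lebesgue_integral_def)
    finally show ?thesis using True by simp
  next
    case False
    then have "h s t = 0" for t by (auto simp: h_def)
    then show ?thesis using False by simp
  qed
  have "set_integrable lborel {a..x} (\<lambda>t. integral {a..t} Q * \<alpha> t)"
    using lborel_pair.integrable_snd[OF h] unfolding inner_s set_integrable_def .
  moreover have "set_integrable lborel {a..x} (\<lambda>s. Q s * integral {s..x} \<alpha>)"
    using lborel_pair.integrable_fst[OF h] unfolding inner_t set_integrable_def .
  moreover have "(LBINT t. LBINT s. h s t) = (LBINT s. LBINT t. h s t)"
    by (rule lborel_pair.Fubini_integral[OF h])
  ultimately show ?thesis
    by (simp add: inner_s inner_t set_borel_integral_eq_integral(2)[symmetric] set_lebesgue_integral_def)
qed

lemma has_integral_product_rule: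
  fixes P P' \<alpha> :: "real \<Rightarrow> complex"
  assumes P: "\<And>t. (P has_vector_derivative P' t) (at t)" and P': "continuous_on UNIV P'"
    and \<alpha>m: "\<alpha> \<in> borel_measurable lborel" and \<alpha>i: "\<alpha> absolutely_integrable_on {a..x}"
    and "a \<le> x"
  shows "((\<lambda>t. P' t * integral {a..t} \<alpha> + P t * \<alpha> t) has_integral P x * integral {a..x} \<alpha>) {a..x}"
proof -
  define B where "B t = integral {a..t} \<alpha>" for t
  have \<alpha>hk: "\<alpha> integrable_on {a..x}" using \<alpha>i by (rule set_lebesgue_integral_eq_integral(1))
  have PC: "continuous_on UNIV P"
    using P by (meson continuous_at_imp_continuous_on has_vector_derivative_continuous)
  have FTC: "(P' has_integral P t - P a) {a..t}" if "a \<le> t" for t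
    by (rule fundamental_theorem_of_calculus[OF that]) (auto intro: has_vector_derivative_at_within P)
  have BC: "continuous_on {a..x} B"
    unfolding B_def using \<alpha>hk by (rule indefinite_integral_continuous_1)
  have P'B: "((\<lambda>s. P' s * B s) has_integral integral {a..x} (\<lambda>s. P' s * B s)) {a..x}"
    by (intro integrable_integral integrable_continuous_interval continuous_intros
        continuous_on_subset[OF P'] BC) auto
  have P\<alpha>: "((\<lambda>t. P t * \<alpha> t) has_integral integral {a..x} (\<lambda>t. P t * \<alpha> t)) {a..x}"
    using absolutely_integrable_continuous_mult[OF continuous_on_subset[OF PC] \<alpha>i]
    by (intro integrable_integral set_lebesgue_integral_eq_integral(1)) auto
  have "integral {a..x} (\<lambda>s. P' s * (B x - B s)) = integral {a..x} (\<lambda>t. (P t - P a) * \<alpha> t)"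
  proof -
    have "integral {a..x} (\<lambda>s. P' s * (B x - B s)) = integral {a..x} (\<lambda>s. P' s * integral {s..x} \<alpha>)"
    proof (rule integral_cong)
      fix s assume "s \<in> {a..x}"
      then have "integral {a..s} \<alpha> + integral {s..x} \<alpha> = integral {a..x} \<alpha>"
        by (intro Henstock_Kurzweil_Integration.integral_combine \<alpha>hk) auto
      then show "P' s * (B x - B s) = P' s * integral {s..x} \<alpha>"
        unfolding B_def by (metis add_diff_cancel_left')
    qed
    also have "\<dots> = integral {a..x} (\<lambda>t. integral {a..t} P' * \<alpha> t)"
      by (rule integral_triangle_swap[OF P' \<alpha>m \<alpha>i])
    also have "\<dots> = integral {a..x} (\<lambda>t. (P t - P a) * \<alpha> t)"
      using FTC by (intro integral_cong) (auto simp: integral_unique)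
    finally show ?thesis .
  qed
  moreover have "integral {a..x} (\<lambda>s. P' s * (B x - B s))
      = (P x - P a) * B x - integral {a..x} (\<lambda>s. P' s * B s)"
    unfolding right_diff_distrib
    by (rule integral_unique, rule has_integral_diff[OF has_integral_mult_left[OF FTC[OF \<open>a \<le> x\<close>]] P'B])
  moreover have "integral {a..x} (\<lambda>t. (P t - P a) * \<alpha> t) = integral {a..x} (\<lambda>t. P t * \<alpha> t) - P a * B x"
    unfolding left_diff_distrib B_def
    by (rule integral_unique, rule has_integral_diff[OF P\<alpha> has_integral_mult_right[OF integrable_integral[OF \<alpha>hk]]])
  ultimately have "integral {a..x} (\<lambda>s. P' s * B s) + integral {a..x} (\<lambda>t. P t * \<alpha> t) = P x * B x"
    by algebra
  then show ?thesis
    using has_integral_add[OF P'B P\<alpha>] by (simp add: B_def)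
qed

lemma has_ac_deriv_mult_C1:
  assumes A: "has_ac_deriv a b A \<alpha>"
    and P: "\<And>t. (P has_vector_derivative P' t) (at t)" and P': "continuous_on UNIV P'"
  shows "has_ac_deriv a b (\<lambda>t. P t * A t) (\<lambda>t. P' t * A t + P t * \<alpha> t)"
  unfolding has_ac_deriv_def
proof
  have \<alpha>i: "\<alpha> absolutely_integrable_on {a..b}" using A unfolding has_ac_deriv_def by blast
  have PC: "continuous_on UNIV P"
    using P by (meson continuous_at_imp_continuous_on has_vector_derivative_continuous)
  have AC: "continuous_on {a..b} A" by (rule continuous_on_if_has_ac_deriv[OF A])
  show "(\<lambda>t. P' t * A t + P t * \<alpha> t) absolutely_integrable_on {a..b}"
    by (intro set_integral_add(1) absolutely_integrable_continuous_mult \<alpha>i absolutely_integrable_continuous_real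
          continuous_intros continuous_on_subset[OF P'] continuous_on_subset[OF PC] AC) auto
  \<comment> \<open>the product rule is proved by Fubini on \<open>lborel \<Otimes>\<^sub>M lborel\<close>, which needs a Borel derivative\<close>
  obtain \<beta> where \<beta>m: "\<beta> \<in> borel_measurable lborel" and N: "negligible {t\<in>{a..b}. \<alpha> t \<noteq> \<beta> t}"
    using absolutely_integrable_borel_representative[OF \<alpha>i] by blast
  show "\<forall>x\<in>{a..b}. P x * A x = P a * A a + integral {a..x} (\<lambda>t. P' t * A t + P t * \<alpha> t)"
  proof
    fix x assume x: "x \<in> {a..b}"
    have \<alpha>\<beta>: "integral {a..t} \<alpha> = integral {a..t} \<beta>" if "t \<in> {a..x}" for t
      by (rule integral_spike[OF N]) (use that x in auto)
    have A_eq: "A t = A a + integral {a..t} \<beta>" if "t \<in> {a..x}" for t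
    proof -
      have "A t = A a + integral {a..t} \<alpha>"
        using A that x unfolding has_ac_deriv_def by (meson atLeastAtMost_iff order_trans)
      then show ?thesis by (simp only: \<alpha>\<beta>[OF that])
    qed
    have \<beta>i: "\<beta> absolutely_integrable_on {a..x}"
      by (rule absolutely_integrable_spike[OF absolutely_integrable_on_subinterval[OF \<alpha>i] N]) (use x in auto)
    have "((\<lambda>t. P' t * A a + (P' t * integral {a..t} \<beta> + P t * \<beta> t))
        has_integral (P x - P a) * A a + P x * integral {a..x} \<beta>) {a..x}"
      using x by (intro has_integral_add has_integral_mult_left fundamental_theorem_of_calculus
          has_integral_product_rule[OF P P' \<beta>m \<beta>i]) (auto intro: has_vector_derivative_at_within P)
    then have "((\<lambda>t. P' t * A t + P t * \<alpha> t) has_integral (P x - P a) * A a + P x * integral {a..x} \<beta>) {a..x}"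
    proof (rule has_integral_spike[OF N, rotated])
      show "P' t * A t + P t * \<alpha> t = P' t * A a + (P' t * integral {a..t} \<beta> + P t * \<beta> t)"
        if "t \<in> {a..x} - {t \<in> {a..b}. \<alpha> t \<noteq> \<beta> t}" for t
        using that x A_eq[of t] by (auto simp: algebra_simps)
    qed
    moreover have "(P x - P a) * A a + P x * integral {a..x} \<beta> = P x * A x - P a * A a"
      using A_eq[of x] x by (simp add: algebra_simps)
    ultimately have "((\<lambda>t. P' t * A t + P t * \<alpha> t) has_integral P x * A x - P a * A a) {a..x}"
      by simp
    then show "P x * A x = P a * A a + integral {a..x} (\<lambda>t. P' t * A t + P t * \<alpha> t)"
      by (simp add: integral_unique)
  qed
qed

section \<open>The equation \<open>w'' = a w + r\<close> and the transmission problem\<close>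

lemma continuous_on_if_has_vector_derivative:
  assumes "\<And>t. (f has_vector_derivative f' t) (at t)"
  shows "continuous_on S f"
  using assms by (meson continuous_at_imp_continuous_on has_vector_derivative_continuous)

lemma has_vector_derivative_translate:
  assumes "(f has_vector_derivative f') (at (x - p))"
  shows "((\<lambda>t. f (t - p)) has_vector_derivative f') (at x)"
proof -
  have "((\<lambda>t. t - p) has_vector_derivative 1) (at x)"
    by (auto intro!: derivative_eq_intros simp: has_vector_derivative_def)
  from vector_diff_chain_at[OF this assms] show ?thesis by (simp add: o_def)
qed

text \<open>\<open>cosh (\<surd>a x)\<close> and \<open>sinh (\<surd>a x) / \<surd>a\<close>, the fundamental solutions of \<open>w'' = a w\<close>;
  the second is extended by continuity to \<open>a = 0\<close>.\<close>

definition cosh_sqrt :: "complex \<Rightarrow> real \<Rightarrow> complex" where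
  "cosh_sqrt a x = cosh (csqrt a * of_real x)"

definition sinh_sqrt :: "complex \<Rightarrow> real \<Rightarrow> complex" where
  "sinh_sqrt a x = (if a = 0 then of_real x else sinh (csqrt a * of_real x) / csqrt a)"

lemma cosh_sqrt_0 [simp]: "cosh_sqrt a 0 = 1"
  by (simp add: cosh_sqrt_def)

lemma sinh_sqrt_0 [simp]: "sinh_sqrt a 0 = 0"
  by (simp add: sinh_sqrt_def)

lemma csqrt_mult_self: "csqrt a * csqrt a = a"
  by (metis power2_csqrt power2_eq_square)

lemma has_vector_derivative_cosh_sqrt: "(cosh_sqrt a has_vector_derivative a * sinh_sqrt a x) (at x)"
proof -
  have "((\<lambda>z. cosh (csqrt a * z)) has_field_derivative sinh (csqrt a * of_real x) * csqrt a) (at (of_real x))"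
    by (auto intro!: derivative_eq_intros)
  from has_vector_derivative_real_field[OF this]
  have "(cosh_sqrt a has_vector_derivative sinh (csqrt a * of_real x) * csqrt a) (at x)"
    unfolding cosh_sqrt_def[abs_def] .
  moreover have "sinh (csqrt a * of_real x) * csqrt a = a * sinh_sqrt a x"
  proof (cases "a = 0")
    case False
    have "a * sinh_sqrt a x = csqrt a * csqrt a * sinh (csqrt a * of_real x) / csqrt a"
      using False by (simp add: sinh_sqrt_def csqrt_mult_self)
    then show ?thesis using False by simp
  qed (simp add: sinh_sqrt_def)
  ultimately show ?thesis by simp
qed

lemma has_vector_derivative_sinh_sqrt: "(sinh_sqrt a has_vector_derivative cosh_sqrt a x) (at x)"
proof (cases "a = 0")
  case True
  have "((\<lambda>z::complex. z) has_field_derivative 1) (at (of_real x))" by (rule DERIV_ident)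
  then have "((\<lambda>t. complex_of_real t) has_vector_derivative 1) (at x)"
    by (rule has_vector_derivative_real_field)
  then show ?thesis using True unfolding cosh_sqrt_def sinh_sqrt_def by simp
next
  case False
  have "((\<lambda>z. sinh (csqrt a * z) / csqrt a) has_field_derivative cosh (csqrt a * of_real x) * csqrt a / csqrt a)
      (at (of_real x))"
    by (auto intro!: derivative_eq_intros)
  from has_vector_derivative_real_field[OF this] show ?thesis
    using False unfolding cosh_sqrt_def sinh_sqrt_def by simp
qed

lemma cosh_sqrt_square_sub_sinh_sqrt_square: "(cosh_sqrt a x)\<^sup>2 - a * (sinh_sqrt a x)\<^sup>2 = 1"
proof (cases "a = 0")
  case False
  then have "a * (sinh_sqrt a x)\<^sup>2 = (sinh (csqrt a * of_real x))\<^sup>2"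
    by (simp add: sinh_sqrt_def power_divide field_simps flip: csqrt_mult_self)
  then show ?thesis by (simp add: cosh_sqrt_def hyperbolic_pythagoras)
qed (simp add: cosh_sqrt_def)

lemma has_ac_deriv_particular_solution:
  fixes r :: "real \<Rightarrow> complex"
  assumes r: "r absolutely_integrable_on {p..q}"
  shows "\<exists>u g. has_ac_deriv p q u g \<and> has_ac_deriv p q g (\<lambda>x. a * u x + r x) \<and> u p = 0 \<and> g p = 0"
proof -
  define C where "C = cosh_sqrt a"
  define S where "S = sinh_sqrt a"
  have dC: "\<And>t. (C has_vector_derivative a * S t) (at t)"
    and dS: "\<And>t. (S has_vector_derivative C t) (at t)"
    unfolding C_def S_def by (rule has_vector_derivative_cosh_sqrt has_vector_derivative_sinh_sqrt)+
  have dAS: "\<And>t. ((\<lambda>t. a * S t) has_vector_derivative a * C t) (at t)"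
    using dS by (intro has_vector_derivative_mult_right)
  have cC: "continuous_on A C" and cS: "continuous_on A S" for A
    by (rule continuous_on_if_has_vector_derivative, fact dC, rule continuous_on_if_has_vector_derivative, fact dS)
  have cAC: "continuous_on UNIV (\<lambda>t. a * C t)" and cAS: "continuous_on UNIV (\<lambda>t. a * S t)"
    by (intro continuous_intros cC cS)+
  define IC where "IC x = integral {p..x} (\<lambda>t. C t * r t)" for x
  define IS where "IS x = integral {p..x} (\<lambda>t. S t * r t)" for x
  have IC: "has_ac_deriv p q IC (\<lambda>t. C t * r t)" and IS: "has_ac_deriv p q IS (\<lambda>t. S t * r t)"
    unfolding IC_def IS_def
    by (intro has_ac_deriv_indefinite_integral absolutely_integrable_continuous_mult cC cS r)+
  \<comment> \<open>variation of constants, \<open>u x = \<integral>\<^sub>p\<^sup>x S (x - t) r t dt\<close> expanded by the addition theorem\<close>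
  define u where "u x = S x * IC x - C x * IS x" for x
  define g where "g x = C x * IC x - a * S x * IS x" for x
  have "has_ac_deriv p q u g"
    using has_ac_deriv_diff[OF has_ac_deriv_mult_C1[OF IC dS cC] has_ac_deriv_mult_C1[OF IS dC cAS]]
    by (rule has_ac_deriv_cong) (simp_all add: u_def g_def algebra_simps)
  moreover have "has_ac_deriv p q g (\<lambda>x. a * u x + r x)"
    using has_ac_deriv_diff[OF has_ac_deriv_mult_C1[OF IC dC cAS] has_ac_deriv_mult_C1[OF IS dAS cAC]]
  proof (rule has_ac_deriv_cong)
    fix x
    show "C x * IC x - a * S x * IS x = g x" by (simp add: g_def)
    have "(C x)\<^sup>2 - a * (S x)\<^sup>2 = 1"
      unfolding C_def S_def by (rule cosh_sqrt_square_sub_sinh_sqrt_square)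
    then show "a * S x * IC x + C x * (C x * r x) - (a * C x * IS x + a * S x * (S x * r x)) = a * u x + r x"
      unfolding u_def by algebra
  qed
  moreover have "u p = 0" "g p = 0" by (simp_all add: u_def g_def IC_def IS_def)
  ultimately show ?thesis by blast
qed

lemma energy_identity:
  fixes w w' :: "real \<Rightarrow> complex"
  assumes w: "\<And>t. (w has_vector_derivative w' t) (at t)"
    and w': "\<And>t. (w' has_vector_derivative a * w t) (at t)" and "p \<le> q"
  shows "a * of_real (integral {p..q} (\<lambda>t. (cmod (w t))\<^sup>2)) + of_real (integral {p..q} (\<lambda>t. (cmod (w' t))\<^sup>2))
    = w' q * cnj (w q) - w' p * cnj (w p)"
proof -
  have cw: "continuous_on {p..q} w" and cw': "continuous_on {p..q} w'"
    by (rule continuous_on_if_has_vector_derivative, fact w, rule continuous_on_if_has_vector_derivative, fact w')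
  have "((\<lambda>t. a * of_real ((cmod (w t))\<^sup>2) + of_real ((cmod (w' t))\<^sup>2)) has_integral
      a * of_real (integral {p..q} (\<lambda>t. (cmod (w t))\<^sup>2)) + of_real (integral {p..q} (\<lambda>t. (cmod (w' t))\<^sup>2))) {p..q}"
    by (intro has_integral_add has_integral_mult_right has_integral_of_real integrable_integral
        integrable_continuous_interval continuous_intros cw cw')
  moreover have "((\<lambda>t. a * of_real ((cmod (w t))\<^sup>2) + of_real ((cmod (w' t))\<^sup>2)) has_integral
      w' q * cnj (w q) - w' p * cnj (w p)) {p..q}"
  proof (rule fundamental_theorem_of_calculus[OF \<open>p \<le> q\<close>])
    fix t
    have "((\<lambda>t. w' t * cnj (w t)) has_vector_derivative w' t * cnj (w' t) + a * w t * cnj (w t)) (at t within {p..q})"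
      using has_vector_derivative_mult[OF has_vector_derivative_at_within[OF w']
          has_vector_derivative_cnj[OF has_vector_derivative_at_within[OF w]]]
      by (simp add: mult.assoc)
    then show "((\<lambda>t. w' t * cnj (w t)) has_vector_derivative
        a * of_real ((cmod (w t))\<^sup>2) + of_real ((cmod (w' t))\<^sup>2)) (at t within {p..q})"
      by (simp only: complex_norm_square mult.assoc add.commute)
  qed
  ultimately show ?thesis by (rule has_integral_unique)
qed

lemma has_vector_derivative_cosh_sinh_sqrt_combination:
  "((\<lambda>t. A * cosh_sqrt a t + B * sinh_sqrt a t) has_vector_derivative
      A * (a * sinh_sqrt a x) + B * cosh_sqrt a x) (at x)"
  "((\<lambda>t. A * (a * sinh_sqrt a t) + B * cosh_sqrt a t) has_vector_derivative
      a * (A * cosh_sqrt a x + B * sinh_sqrt a x)) (at x)"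
proof -
  show "((\<lambda>t. A * cosh_sqrt a t + B * sinh_sqrt a t) has_vector_derivative
      A * (a * sinh_sqrt a x) + B * cosh_sqrt a x) (at x)"
    by (intro has_vector_derivative_add has_vector_derivative_mult_right
        has_vector_derivative_cosh_sqrt has_vector_derivative_sinh_sqrt)
  have "((\<lambda>t. A * (a * sinh_sqrt a t) + B * cosh_sqrt a t) has_vector_derivative
      A * (a * cosh_sqrt a x) + B * (a * sinh_sqrt a x)) (at x)"
    by (intro has_vector_derivative_add has_vector_derivative_mult_right
        has_vector_derivative_cosh_sqrt has_vector_derivative_sinh_sqrt)
  then show "((\<lambda>t. A * (a * sinh_sqrt a t) + B * cosh_sqrt a t) has_vector_derivative
      a * (A * cosh_sqrt a x + B * sinh_sqrt a x)) (at x)"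
    by (simp add: algebra_simps)
qed

lemma has_ac_deriv_cosh_sqrt_sinh_sqrt:
  "has_ac_deriv p q (\<lambda>x. cosh_sqrt a (x - c)) (\<lambda>x. a * sinh_sqrt a (x - c))"
  "has_ac_deriv p q (\<lambda>x. sinh_sqrt a (x - c)) (\<lambda>x. cosh_sqrt a (x - c))"
proof -
  have dC: "\<And>t. ((\<lambda>x. cosh_sqrt a (x - c)) has_vector_derivative a * sinh_sqrt a (t - c)) (at t)"
    and dS: "\<And>t. ((\<lambda>x. sinh_sqrt a (x - c)) has_vector_derivative cosh_sqrt a (t - c)) (at t)"
    by (intro has_vector_derivative_translate has_vector_derivative_cosh_sqrt has_vector_derivative_sinh_sqrt)+
  show "has_ac_deriv p q (\<lambda>x. cosh_sqrt a (x - c)) (\<lambda>x. a * sinh_sqrt a (x - c))"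
    by (intro has_ac_deriv_if_C1 dC continuous_intros continuous_on_if_has_vector_derivative[OF dS])
  show "has_ac_deriv p q (\<lambda>x. sinh_sqrt a (x - c)) (\<lambda>x. cosh_sqrt a (x - c))"
    by (intro has_ac_deriv_if_C1 dS continuous_on_if_has_vector_derivative[OF dC])
qed

lemma integral_sinh_sqrt_square_pos:
  assumes "0 < L"
  shows "0 < integral {0..L} (\<lambda>t. (cmod (sinh_sqrt a t))\<^sup>2)"
proof -
  have cS: "continuous_on {0..L} (\<lambda>t. (cmod (sinh_sqrt a t))\<^sup>2)"
    by (intro continuous_intros continuous_on_if_has_vector_derivative[OF has_vector_derivative_sinh_sqrt])
  have "integral {0..L} (\<lambda>t. (cmod (sinh_sqrt a t))\<^sup>2) \<noteq> 0"
  proof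
    assume "integral {0..L} (\<lambda>t. (cmod (sinh_sqrt a t))\<^sup>2) = 0"
    then have zero: "\<And>t. t \<in> cbox 0 L \<Longrightarrow> sinh_sqrt a t = 0"
      using integral_eq_0_iff[OF cS assms] by simp
    have d1: "(sinh_sqrt a has_vector_derivative 1) (at 0 within cbox 0 L)"
      using has_vector_derivative_at_within[OF has_vector_derivative_sinh_sqrt[of a 0]]
      by (simp add: cosh_sqrt_def)
    have d0: "(sinh_sqrt a has_vector_derivative 0) (at 0 within cbox 0 L)"
      by (rule has_vector_derivative_transform[OF _ zero has_vector_derivative_const]) (use assms in simp)
    have "(1::complex) = 0"
      by (rule vector_derivative_unique_within_closed_interval[OF assms _ d1 d0]) (use assms in simp)
    then show False by simp
  qed
  moreover have "0 \<le> integral {0..L} (\<lambda>t. (cmod (sinh_sqrt a t))\<^sup>2)"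
    by (intro integral_nonneg integrable_continuous_interval cS) auto
  ultimately show ?thesis by simp
qed

text \<open>The determinant of the homogeneous transmission problem for \<open>u'' = a\<^sub>1 u\<close> on \<open>[-L, 0]\<close>
  and \<open>v'' = a\<^sub>2 v\<close> on \<open>[0, L]\<close>. If it vanished, the energy identities of \<open>sinh_sqrt a\<^sub>1\<close> and
  of the solution \<open>v\<close> matching it at \<open>0\<close> would add up to \<open>Im (k\<^sub>1 a\<^sub>1) (\<parallel>S\<^sub>1\<parallel>\<^sup>2 + \<parallel>v\<parallel>\<^sup>2) = 0\<close>.\<close>

lemma transmission_determinant_nonzero:
  fixes a1 a2 :: complex and k1 k2 L :: real
  assumes k1: "k1 > 0" and k2: "k2 > 0" and L: "L > 0"
    and nd: "(a1 = 0 \<and> a2 = 0) \<or> (Im (of_real k1 * a1) = Im (of_real k2 * a2) \<and> Im (of_real k1 * a1) \<noteq> 0)"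
  shows "of_real k2 * sinh_sqrt a1 L * cosh_sqrt a2 L + of_real k1 * cosh_sqrt a1 L * sinh_sqrt a2 L \<noteq> 0"
proof (cases "a1 = 0 \<and> a2 = 0")
  case True
  then have "of_real k2 * sinh_sqrt a1 L * cosh_sqrt a2 L + of_real k1 * cosh_sqrt a1 L * sinh_sqrt a2 L
      = of_real ((k1 + k2) * L)"
    by (simp add: sinh_sqrt_def cosh_sqrt_def algebra_simps)
  moreover have "(k1 + k2) * L \<noteq> 0" using k1 k2 L by simp
  ultimately show ?thesis by (metis of_real_eq_0_iff)
next
  case False
  with nd have Im_eq: "Im (of_real k1 * a1) = Im (of_real k2 * a2)" and Im_nz: "Im (of_real k1 * a1) \<noteq> 0"
    by auto
  show ?thesis
  proof
    assume D: "of_real k2 * sinh_sqrt a1 L * cosh_sqrt a2 L + of_real k1 * cosh_sqrt a1 L * sinh_sqrt a2 L = 0"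
    define c where "c = complex_of_real (k1 / k2)"
    define v where "v t = sinh_sqrt a1 L * cosh_sqrt a2 t + (c * cosh_sqrt a1 L) * sinh_sqrt a2 t" for t
    define v' where "v' t = sinh_sqrt a1 L * (a2 * sinh_sqrt a2 t) + (c * cosh_sqrt a1 L) * cosh_sqrt a2 t" for t
    have dv: "(v has_vector_derivative v' t) (at t)" and dv': "(v' has_vector_derivative a2 * v t) (at t)" for t
      unfolding v_def[abs_def] v'_def[abs_def] by (rule has_vector_derivative_cosh_sinh_sqrt_combination)+
    have "of_real k2 * v L = 0" using D k2 by (simp add: v_def c_def algebra_simps)
    then have vL: "v L = 0" using k2 by simp
    define K1 where "K1 = integral {0..L} (\<lambda>t. (cmod (sinh_sqrt a1 t))\<^sup>2)"
    define K2 where "K2 = integral {0..L} (\<lambda>t. (cmod (v t))\<^sup>2)"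
    define J1 where "J1 = integral {0..L} (\<lambda>t. (cmod (cosh_sqrt a1 t))\<^sup>2)"
    define J2 where "J2 = integral {0..L} (\<lambda>t. (cmod (v' t))\<^sup>2)"
    have E1: "a1 * of_real K1 + of_real J1 = cosh_sqrt a1 L * cnj (sinh_sqrt a1 L)"
      using energy_identity[OF has_vector_derivative_sinh_sqrt has_vector_derivative_cosh_sqrt, of 0 L] L
      unfolding K1_def J1_def by simp
    have E2: "a2 * of_real K2 + of_real J2 = - (c * cosh_sqrt a1 L * cnj (sinh_sqrt a1 L))"
    proof -
      have "v 0 = sinh_sqrt a1 L" "v' 0 = c * cosh_sqrt a1 L" by (simp_all add: v_def v'_def)
      then show ?thesis
        using energy_identity[OF dv dv', of 0 L] L vL unfolding K2_def J2_def by simp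
    qed
    have "of_real k1 * (a1 * of_real K1 + of_real J1) + of_real k2 * (a2 * of_real K2 + of_real J2) = 0"
      unfolding E1 E2 c_def using k2 by (simp add: field_simps)
    then have "Im (of_real k1 * (a1 * of_real K1 + of_real J1) + of_real k2 * (a2 * of_real K2 + of_real J2)) = 0"
      by (simp only: zero_complex.sel)
    then have "Im (of_real k1 * a1) * K1 + Im (of_real k2 * a2) * K2 = 0"
      by (simp add: algebra_simps)
    then have "Im (of_real k1 * a1) * (K1 + K2) = 0" using Im_eq by (simp add: algebra_simps)
    then have "K1 + K2 = 0" using Im_nz by simp
    moreover have "0 < K1"
      unfolding K1_def by (rule integral_sinh_sqrt_square_pos[OF L])
    moreover have "0 \<le> K2"
      unfolding K2_def
      by (intro integral_nonneg integrable_continuous_interval continuous_intros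
          continuous_on_if_has_vector_derivative[OF dv]) auto
    ultimately show False by simp
  qed
qed

lemma transmission_problem_solvable:
  fixes a1 a2 :: complex and k1 k2 L :: real and r1 r2 :: "real \<Rightarrow> complex"
  assumes k1: "k1 > 0" and k2: "k2 > 0" and L: "L > 0"
    and nd: "(a1 = 0 \<and> a2 = 0) \<or> (Im (of_real k1 * a1) = Im (of_real k2 * a2) \<and> Im (of_real k1 * a1) \<noteq> 0)"
    and r1: "r1 absolutely_integrable_on {-L..0}" and r2: "r2 absolutely_integrable_on {0..L}"
  shows "\<exists>u g1 v g2. has_ac_deriv (-L) 0 u g1 \<and> has_ac_deriv (-L) 0 g1 (\<lambda>x. a1 * u x + r1 x) \<and>
           has_ac_deriv 0 L v g2 \<and> has_ac_deriv 0 L g2 (\<lambda>x. a2 * v x + r2 x) \<and>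
           u (-L) = 0 \<and> v L = 0 \<and> u 0 = v 0 \<and> of_real k1 * g1 0 = of_real k2 * g2 0"
proof -
  obtain u0 g0 where u0: "has_ac_deriv (-L) 0 u0 g0" "has_ac_deriv (-L) 0 g0 (\<lambda>x. a1 * u0 x + r1 x)"
    "u0 (-L) = 0" "g0 (-L) = 0"
    using has_ac_deriv_particular_solution[OF r1, of a1] by blast
  obtain v0 h0 where v0: "has_ac_deriv 0 L v0 h0" "has_ac_deriv 0 L h0 (\<lambda>x. a2 * v0 x + r2 x)"
    "v0 0 = 0" "h0 0 = 0"
    using has_ac_deriv_particular_solution[OF r2, of a2] by blast
  define C1 where "C1 x = cosh_sqrt a1 (x - - L)" for x
  define S1 where "S1 x = sinh_sqrt a1 (x - - L)" for x
  define C2 where "C2 = cosh_sqrt a2"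
  define S2 where "S2 = sinh_sqrt a2"
  have C1: "has_ac_deriv (-L) 0 C1 (\<lambda>x. a1 * S1 x)" and S1: "has_ac_deriv (-L) 0 S1 C1"
    unfolding C1_def S1_def by (rule has_ac_deriv_cosh_sqrt_sinh_sqrt)+
  have C2: "has_ac_deriv 0 L C2 (\<lambda>x. a2 * S2 x)" and S2: "has_ac_deriv 0 L S2 C2"
    using has_ac_deriv_cosh_sqrt_sinh_sqrt[where c = 0] by (simp_all add: C2_def S2_def)
  have AS2: "has_ac_deriv 0 L (\<lambda>x. a2 * S2 x) (\<lambda>x. a2 * C2 x)"
    by (rule has_ac_deriv_cmult[OF S2])
  define D where "D = of_real k2 * sinh_sqrt a1 L * cosh_sqrt a2 L + of_real k1 * cosh_sqrt a1 L * sinh_sqrt a2 L"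
  have "D \<noteq> 0" unfolding D_def by (rule transmission_determinant_nonzero[OF k1 k2 L nd])
  text \<open>Shooting from both ends: \<open>u = u\<^sub>0 + A S\<^sub>1\<close> vanishes at \<open>-L\<close>, and \<open>v = v\<^sub>0 + B C\<^sub>2 + B' S\<^sub>2\<close>
    matches \<open>u\<close> and its flux at \<open>0\<close>; \<open>A\<close> is then fixed by \<open>v(L) = 0\<close>.\<close>
  define A where "A = - (of_real k2 * v0 L + of_real k2 * u0 0 * cosh_sqrt a2 L + of_real k1 * g0 0 * sinh_sqrt a2 L) / D"
  define B where "B = u0 0 + A * sinh_sqrt a1 L"
  define B' where "B' = of_real k1 * (g0 0 + A * cosh_sqrt a1 L) / of_real k2"
  define u where "u x = u0 x + A * S1 x" for x
  define g1 where "g1 x = g0 x + A * C1 x" for x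
  define v where "v x = v0 x + B * C2 x + B' * S2 x" for x
  define g2 where "g2 x = h0 x + B * (a2 * S2 x) + B' * C2 x" for x
  have "has_ac_deriv (-L) 0 u g1"
    unfolding u_def g1_def by (intro has_ac_deriv_add has_ac_deriv_cmult u0 S1)
  moreover have "has_ac_deriv (-L) 0 g1 (\<lambda>x. a1 * u x + r1 x)"
    using has_ac_deriv_add[OF u0(2) has_ac_deriv_cmult[OF C1, of A]]
    by (rule has_ac_deriv_cong) (simp_all add: g1_def u_def algebra_simps)
  moreover have "has_ac_deriv 0 L v g2"
    unfolding v_def g2_def by (intro has_ac_deriv_add has_ac_deriv_cmult v0 C2 S2)
  moreover have "has_ac_deriv 0 L g2 (\<lambda>x. a2 * v x + r2 x)"
    using has_ac_deriv_add[OF has_ac_deriv_add[OF v0(2) has_ac_deriv_cmult[OF AS2, of B]]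
        has_ac_deriv_cmult[OF C2, of B']]
    by (rule has_ac_deriv_cong) (simp_all add: g2_def v_def algebra_simps)
  moreover have "u (-L) = 0" "u 0 = v 0" "of_real k1 * g1 0 = of_real k2 * g2 0"
    using k2 by (simp_all add: u_def v_def g1_def g2_def u0 v0 S1_def C1_def S2_def C2_def B_def B'_def)
  moreover have "v L = 0"
  proof -
    have "of_real k2 * v L = of_real k2 * v0 L + of_real k2 * u0 0 * cosh_sqrt a2 L
        + of_real k1 * g0 0 * sinh_sqrt a2 L + A * D"
      using k2 by (simp add: v_def C2_def S2_def B_def B'_def D_def field_simps)
    also have "\<dots> = 0" using \<open>D \<noteq> 0\<close> by (simp add: A_def field_simps)
    finally show ?thesis using k2 by simp
  qed
  ultimately show ?thesis by blast
qed

section \<open>The frequency variable \<open>\<xi>\<close>\<close>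

lemma integrable_abs_powr_over_quartic:
  fixes p :: real
  assumes "-1 < p" "p < 3"
  shows "integrable lborel (\<lambda>\<xi>::real. \<bar>\<xi>\<bar> powr p / (1 + \<xi>^4))"
proof -
  define h where "h \<xi> = \<bar>\<xi>\<bar> powr p / (1 + \<xi>^4)" for \<xi> :: real
  have "set_integrable lborel {0..1} (\<lambda>x::real. x powr p)"
    using integrable_on_powr_from_0[of p 1] assms
    by (intro set_integrable_lborel_if_absolutely_integrable nonnegative_absolutely_integrable_1) auto
  moreover have "set_integrable lborel {1..} (\<lambda>x::real. x powr (p - 4))"
    using has_integral_powr_to_inf[of "p - 4" 1] assms unfolding integrable_on_def
    by (intro set_integrable_lborel_if_absolutely_integrable nonnegative_absolutely_integrable_1) auto
  ultimately have "integrable lborel (\<lambda>x. indicator {0..1} x *\<^sub>R x powr p + indicator {1..} x *\<^sub>R x powr (p - 4))"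
    unfolding set_integrable_def by (rule Bochner_Integration.integrable_add)
  then have "integrable lborel (\<lambda>x. indicator {0..} x *\<^sub>R h x)"
  proof (rule Bochner_Integration.integrable_bound)
    show "(\<lambda>x. indicator {0..} x *\<^sub>R h x) \<in> borel_measurable lborel"
      unfolding h_def by measurable
    have "indicator {0..} x *\<^sub>R h x \<le> indicator {0..1} x *\<^sub>R x powr p + indicator {1..} x *\<^sub>R x powr (p - 4)"
      for x :: real
    proof (cases "0 \<le> x")
      case x0: True
      show ?thesis
      proof (cases "x \<le> 1")
        case True
        have "x powr p / (1 + x^4) \<le> x powr p / 1" by (intro divide_left_mono) (auto simp: add_pos_nonneg)
        then show ?thesis using x0 True by (simp add: h_def indicator_def add_increasing2)
      next
        case False
        have "x powr p / (1 + x^4) \<le> x powr p / x^4"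
          using False by (intro divide_left_mono) (auto intro!: mult_pos_pos simp: add_pos_nonneg)
        also have "\<dots> = x powr (p - 4)" using False by (simp add: powr_diff powr_realpow)
        finally show ?thesis using x0 False by (simp add: h_def)
      qed
    qed (simp add: h_def)
    moreover have "0 \<le> h x" for x by (simp add: h_def add_pos_nonneg)
    ultimately show "AE x in lborel. norm (indicator {0..} x *\<^sub>R h x)
        \<le> norm (indicator {0..1} x *\<^sub>R x powr p + indicator {1..} x *\<^sub>R x powr (p - 4))"
      by (intro AE_I2) (auto simp: indicator_def)
  qed
  then have "has_bochner_integral lborel h (2 *\<^sub>R integral\<^sup>L lborel (\<lambda>x. indicator {0..} x *\<^sub>R h x))"
    by (rule has_bochner_integral_even_function[OF has_bochner_integral_integrable]) (simp add: h_def)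
  then show ?thesis unfolding h_def by (rule integrable.intros)
qed

lemma mu_measurable [measurable]: "mu \<alpha> \<in> borel_measurable borel"
  unfolding mu_def by measurable

lemma mu_nonneg: "0 \<le> mu \<alpha> \<xi>"
  unfolding mu_def by simp

lemma mu_square: "(mu \<alpha> \<xi>)\<^sup>2 = \<bar>\<xi>\<bar> powr (2 * \<alpha> - 1)"
  unfolding mu_def by (simp add: power2_eq_square flip: powr_add)

lemma square_mult_abs_powr: "\<xi>\<^sup>2 * \<bar>\<xi>\<bar> powr (2 * \<alpha> - 1) = \<bar>\<xi>\<bar> powr (2 * \<alpha> + 1)" for \<xi> \<alpha> :: real
proof (cases "\<xi> = 0")
  case False
  then have "\<bar>\<xi>\<bar> powr 2 = \<xi>\<^sup>2" by (simp add: powr_numeral)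
  moreover have "\<bar>\<xi>\<bar> powr (2 * \<alpha> + 1) = \<bar>\<xi>\<bar> powr 2 * \<bar>\<xi>\<bar> powr (2 * \<alpha> - 1)"
    unfolding powr_add[symmetric] by (simp add: algebra_simps)
  ultimately show ?thesis by simp
qed simp

definition resolvent_den :: "real \<Rightarrow> real \<Rightarrow> real \<Rightarrow> complex" where
  "resolvent_den lam \<eta> \<xi> = \<i> * of_real lam + of_real (\<xi>\<^sup>2 + \<eta>)"

definition resolvent_kernel :: "real \<Rightarrow> real \<Rightarrow> real \<Rightarrow> real \<Rightarrow> complex" where
  "resolvent_kernel \<alpha> lam \<eta> \<xi> = of_real (mu \<alpha> \<xi>) / resolvent_den lam \<eta> \<xi>"

definition kernel_moment :: "real \<Rightarrow> real \<Rightarrow> real \<Rightarrow> complex" where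
  "kernel_moment \<alpha> lam \<eta> = (LINT \<xi>|lborel. of_real (mu \<alpha> \<xi>) * resolvent_kernel \<alpha> lam \<eta> \<xi>)"

lemma resolvent_den_measurable [measurable]: "resolvent_den lam \<eta> \<in> borel_measurable borel"
  unfolding resolvent_den_def by measurable

lemma resolvent_kernel_measurable [measurable]: "resolvent_kernel \<alpha> lam \<eta> \<in> borel_measurable borel"
  unfolding resolvent_kernel_def by measurable

lemma norm_resolvent_den_square: "(cmod (resolvent_den lam \<eta> \<xi>))\<^sup>2 = lam\<^sup>2 + (\<xi>\<^sup>2 + \<eta>)\<^sup>2"
  unfolding resolvent_den_def by (simp add: cmod_power2)

context
  fixes \<alpha> lam \<eta> :: real
  assumes \<alpha>: "0 < \<alpha>" "\<alpha> < 1" and \<eta>: "0 \<le> \<eta>" and nondeg: "lam \<noteq> 0 \<or> 0 < \<eta>"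
begin

lemma resolvent_den_lower_bound:
  obtains c where "0 < c" "\<And>\<xi>. c * (1 + \<xi>^4) \<le> (cmod (resolvent_den lam \<eta> \<xi>))\<^sup>2"
proof
  show "0 < min (lam\<^sup>2 + \<eta>\<^sup>2) 1"
    using nondeg by (auto simp: add_pos_nonneg add_nonneg_pos)
  fix \<xi> :: real
  have "min (lam\<^sup>2 + \<eta>\<^sup>2) 1 * \<xi>^4 \<le> \<xi>^4"
    by (intro mult_left_le_one_le) auto
  then have "min (lam\<^sup>2 + \<eta>\<^sup>2) 1 * (1 + \<xi>^4) \<le> lam\<^sup>2 + \<eta>\<^sup>2 + \<xi>^4"
    by (simp add: distrib_left)
  also have "\<dots> \<le> (cmod (resolvent_den lam \<eta> \<xi>))\<^sup>2"
    using \<eta> unfolding norm_resolvent_den_square power2_sum by (simp add: power4_eq_xxxx power2_eq_square)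
  finally show "min (lam\<^sup>2 + \<eta>\<^sup>2) 1 * (1 + \<xi>^4) \<le> (cmod (resolvent_den lam \<eta> \<xi>))\<^sup>2" .
qed

lemma resolvent_den_nonzero: "resolvent_den lam \<eta> \<xi> \<noteq> 0"
proof -
  obtain c where "0 < c" "c * (1 + \<xi>^4) \<le> (cmod (resolvent_den lam \<eta> \<xi>))\<^sup>2"
    using resolvent_den_lower_bound by metis
  moreover have "0 < c * (1 + \<xi>^4)" using \<open>0 < c\<close> by (simp add: add_pos_nonneg)
  ultimately show ?thesis by auto
qed

lemma integrable_if_resolvent_den_bound:
  assumes "X \<in> borel_measurable lborel" "\<And>\<xi>. 0 \<le> X \<xi>"
    and "\<And>\<xi>. X \<xi> * (cmod (resolvent_den lam \<eta> \<xi>))\<^sup>2 \<le> K * (\<bar>\<xi>\<bar> powr (2 * \<alpha> - 1) + \<bar>\<xi>\<bar> powr (2 * \<alpha> + 1))"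
  shows "integrable lborel X"
proof -
  obtain c where c: "0 < c" "\<And>\<xi>. c * (1 + \<xi>^4) \<le> (cmod (resolvent_den lam \<eta> \<xi>))\<^sup>2"
    using resolvent_den_lower_bound by metis
  define M where "M \<xi> = (\<bar>\<xi>\<bar> powr (2 * \<alpha> - 1) + \<bar>\<xi>\<bar> powr (2 * \<alpha> + 1)) / (1 + \<xi>^4)" for \<xi>
  have "integrable lborel (\<lambda>\<xi>. (\<bar>K\<bar> / c) * M \<xi>)"
    unfolding M_def add_divide_distrib using \<alpha>
    by (intro integrable_mult_right Bochner_Integration.integrable_add integrable_abs_powr_over_quartic) auto
  then show ?thesis
  proof (rule Bochner_Integration.integrable_bound)
    show "AE \<xi> in lborel. norm (X \<xi>) \<le> norm (\<bar>K\<bar> / c * M \<xi>)"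
    proof (rule AE_I2)
      fix \<xi> :: real
      have q: "0 < 1 + \<xi>^4" by (simp add: add_pos_nonneg)
      have "X \<xi> * (c * (1 + \<xi>^4)) \<le> X \<xi> * (cmod (resolvent_den lam \<eta> \<xi>))\<^sup>2"
        by (rule mult_left_mono[OF c(2) assms(2)])
      also have "\<dots> \<le> \<bar>K\<bar> * (\<bar>\<xi>\<bar> powr (2 * \<alpha> - 1) + \<bar>\<xi>\<bar> powr (2 * \<alpha> + 1))"
        using assms(3)[of \<xi>] by (rule order_trans) (intro mult_right_mono add_nonneg_nonneg; simp)
      finally have "X \<xi> * (c * (1 + \<xi>^4)) \<le> \<bar>K\<bar> * (\<bar>\<xi>\<bar> powr (2 * \<alpha> - 1) + \<bar>\<xi>\<bar> powr (2 * \<alpha> + 1))" .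
      then have "X \<xi> \<le> \<bar>K\<bar> * (\<bar>\<xi>\<bar> powr (2 * \<alpha> - 1) + \<bar>\<xi>\<bar> powr (2 * \<alpha> + 1)) / (c * (1 + \<xi>^4))"
        using c(1) q by (simp add: pos_le_divide_eq)
      also have "\<dots> = \<bar>K\<bar> / c * M \<xi>"
        by (simp add: M_def)
      finally have "X \<xi> \<le> \<bar>K\<bar> / c * M \<xi>" .
      moreover have "0 \<le> M \<xi>" using q by (simp add: M_def)
      ultimately show "norm (X \<xi>) \<le> norm (\<bar>K\<bar> / c * M \<xi>)"
        using assms(2)[of \<xi>] c(1) by (simp add: abs_mult)
    qed
  qed (use assms(1) in simp)
qed

lemma integrable_resolvent_kernel_square:
  "integrable lborel (\<lambda>\<xi>. (cmod (resolvent_kernel \<alpha> lam \<eta> \<xi>))\<^sup>2)"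
proof (rule integrable_if_resolvent_den_bound[where K = 1])
  fix \<xi>
  have "(cmod (resolvent_kernel \<alpha> lam \<eta> \<xi>))\<^sup>2 * (cmod (resolvent_den lam \<eta> \<xi>))\<^sup>2 = \<bar>\<xi>\<bar> powr (2 * \<alpha> - 1)"
    using resolvent_den_nonzero[of \<xi>]
    by (simp add: resolvent_kernel_def norm_divide power_divide mu_nonneg mu_square)
  then show "(cmod (resolvent_kernel \<alpha> lam \<eta> \<xi>))\<^sup>2 * (cmod (resolvent_den lam \<eta> \<xi>))\<^sup>2
      \<le> 1 * (\<bar>\<xi>\<bar> powr (2 * \<alpha> - 1) + \<bar>\<xi>\<bar> powr (2 * \<alpha> + 1))"
    by simp
qed auto

lemma integrable_abs_mult_resolvent_kernel_square:
  "integrable lborel (\<lambda>\<xi>. (cmod (of_real \<bar>\<xi>\<bar> * resolvent_kernel \<alpha> lam \<eta> \<xi>))\<^sup>2)"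
proof (rule integrable_if_resolvent_den_bound[where K = 1])
  fix \<xi>
  have "(cmod (of_real \<bar>\<xi>\<bar> * resolvent_kernel \<alpha> lam \<eta> \<xi>))\<^sup>2 * (cmod (resolvent_den lam \<eta> \<xi>))\<^sup>2
      = \<xi>\<^sup>2 * \<bar>\<xi>\<bar> powr (2 * \<alpha> - 1)"
    using resolvent_den_nonzero[of \<xi>]
    by (simp add: resolvent_kernel_def norm_mult norm_divide power_mult_distrib power_divide mu_nonneg mu_square)
  also have "\<dots> = \<bar>\<xi>\<bar> powr (2 * \<alpha> + 1)"
    by (rule square_mult_abs_powr)
  finally show "(cmod (of_real \<bar>\<xi>\<bar> * resolvent_kernel \<alpha> lam \<eta> \<xi>))\<^sup>2 * (cmod (resolvent_den lam \<eta> \<xi>))\<^sup>2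
      \<le> 1 * (\<bar>\<xi>\<bar> powr (2 * \<alpha> - 1) + \<bar>\<xi>\<bar> powr (2 * \<alpha> + 1))"
    by simp
qed auto

lemma integrable_mu_mult_resolvent_kernel:
  "integrable lborel (\<lambda>\<xi>. of_real (mu \<alpha> \<xi>) * resolvent_kernel \<alpha> lam \<eta> \<xi>)"
proof (subst integrable_norm_iff[symmetric])
  show "integrable lborel (\<lambda>\<xi>. norm (of_real (mu \<alpha> \<xi>) * resolvent_kernel \<alpha> lam \<eta> \<xi>))"
  proof (rule integrable_if_resolvent_den_bound[where K = "\<bar>lam\<bar> + \<eta> + 1"])
    fix \<xi>
    define d where "d = cmod (resolvent_den lam \<eta> \<xi>)"
    have "d \<le> cmod (\<i> * of_real lam) + cmod (of_real (\<xi>\<^sup>2 + \<eta>) :: complex)"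
      unfolding d_def resolvent_den_def by (rule norm_triangle_ineq)
    also have "\<dots> = \<bar>lam\<bar> + (\<xi>\<^sup>2 + \<eta>)"
      using \<eta> by (simp add: norm_mult del: of_real_add)
    finally have "d \<le> \<bar>lam\<bar> + (\<xi>\<^sup>2 + \<eta>)" .
    moreover have "0 < d" using resolvent_den_nonzero[of \<xi>] by (simp add: d_def)
    then have "norm (of_real (mu \<alpha> \<xi>) * resolvent_kernel \<alpha> lam \<eta> \<xi>) * d\<^sup>2 = (mu \<alpha> \<xi>)\<^sup>2 * d"
      by (simp add: resolvent_kernel_def norm_mult norm_divide d_def[symmetric] mu_nonneg power2_eq_square)
    also have "\<dots> \<le> (mu \<alpha> \<xi>)\<^sup>2 * (\<bar>lam\<bar> + \<eta> + \<xi>\<^sup>2)"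
      using \<open>d \<le> \<bar>lam\<bar> + (\<xi>\<^sup>2 + \<eta>)\<close> by (intro mult_left_mono) auto
    also have "\<dots> = (\<bar>lam\<bar> + \<eta>) * (mu \<alpha> \<xi>)\<^sup>2 + \<xi>\<^sup>2 * (mu \<alpha> \<xi>)\<^sup>2"
      by (simp add: algebra_simps)
    also have "\<dots> = (\<bar>lam\<bar> + \<eta>) * \<bar>\<xi>\<bar> powr (2 * \<alpha> - 1) + \<bar>\<xi>\<bar> powr (2 * \<alpha> + 1)"
      by (simp add: mu_square square_mult_abs_powr)
    also have "\<dots> \<le> (\<bar>lam\<bar> + \<eta> + 1) * (\<bar>\<xi>\<bar> powr (2 * \<alpha> - 1) + \<bar>\<xi>\<bar> powr (2 * \<alpha> + 1))"
      using \<eta> by (simp add: algebra_simps)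
    finally show "norm (of_real (mu \<alpha> \<xi>) * resolvent_kernel \<alpha> lam \<eta> \<xi>) * (cmod (resolvent_den lam \<eta> \<xi>))\<^sup>2
        \<le> (\<bar>lam\<bar> + \<eta> + 1) * (\<bar>\<xi>\<bar> powr (2 * \<alpha> - 1) + \<bar>\<xi>\<bar> powr (2 * \<alpha> + 1))"
      by (simp add: d_def)
  qed auto
qed measurable

lemma resolvent_den_multiplier_bound:
  obtains K where "\<And>\<xi>. cmod (1 / resolvent_den lam \<eta> \<xi>) \<le> K"
    and "\<And>\<xi>. cmod (of_real \<bar>\<xi>\<bar> / resolvent_den lam \<eta> \<xi>) \<le> K"
proof -
  obtain c where c: "0 < c" "\<And>\<xi>. c * (1 + \<xi>^4) \<le> (cmod (resolvent_den lam \<eta> \<xi>))\<^sup>2"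
    using resolvent_den_lower_bound by metis
  have "cmod (1 / resolvent_den lam \<eta> \<xi>) \<le> 1 / sqrt c \<and> cmod (of_real \<bar>\<xi>\<bar> / resolvent_den lam \<eta> \<xi>) \<le> 1 / sqrt c"
    for \<xi> :: real
  proof -
    have d: "0 < cmod (resolvent_den lam \<eta> \<xi>)" using resolvent_den_nonzero[of \<xi>] by simp
    have "\<xi>\<^sup>2 \<le> 1 + \<xi>^4"
      using le_one_plus_square[of "\<xi>\<^sup>2"] by (simp flip: power_mult)
    then have "c * 1 \<le> c * (1 + \<xi>^4)" and "c * \<xi>\<^sup>2 \<le> c * (1 + \<xi>^4)"
      using c(1) by (auto intro!: mult_left_mono)
    then have "sqrt c \<le> cmod (resolvent_den lam \<eta> \<xi>)" "sqrt c * \<bar>\<xi>\<bar> \<le> cmod (resolvent_den lam \<eta> \<xi>)"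
      using c(2)[of \<xi>] real_sqrt_le_mono[of "c * \<xi>\<^sup>2" "(cmod (resolvent_den lam \<eta> \<xi>))\<^sup>2"]
        real_sqrt_le_mono[of c "(cmod (resolvent_den lam \<eta> \<xi>))\<^sup>2"]
      by (auto simp: real_sqrt_mult)
    then show ?thesis
      using c(1) d by (simp add: norm_divide field_simps)
  qed
  then show ?thesis by (intro that[of "1 / sqrt c"]) blast+
qed

lemma kernel_moment_Re_pos: "0 < Re (kernel_moment \<alpha> lam \<eta>)"
proof -
  define k where "k \<xi> = of_real (mu \<alpha> \<xi>) * resolvent_kernel \<alpha> lam \<eta> \<xi>" for \<xi>
  have Re_k: "Re (k \<xi>) = (mu \<alpha> \<xi>)\<^sup>2 * (\<xi>\<^sup>2 + \<eta>) / (cmod (resolvent_den lam \<eta> \<xi>))\<^sup>2" for \<xi>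
  proof -
    have "k \<xi> = of_real ((mu \<alpha> \<xi>)\<^sup>2) / resolvent_den lam \<eta> \<xi>"
      by (simp add: k_def resolvent_kernel_def power2_eq_square)
    moreover have "Re (resolvent_den lam \<eta> \<xi>) = \<xi>\<^sup>2 + \<eta>" "Im (resolvent_den lam \<eta> \<xi>) = lam"
      by (simp_all add: resolvent_den_def)
    ultimately show ?thesis by (simp add: Re_divide cmod_power2)
  qed
  have Re_k_nonneg: "0 \<le> Re (k \<xi>)" for \<xi>
    unfolding Re_k using \<eta> by simp
  have Re_k_pos: "0 < Re (k \<xi>)" if "\<xi> \<noteq> 0" for \<xi>
    unfolding Re_k using that \<eta> resolvent_den_nonzero[of \<xi>]
    by (simp add: mu_square add_pos_nonneg)
  have k: "integrable lborel k"
    unfolding k_def by (rule integrable_mu_mult_resolvent_kernel)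
  have "{\<xi> \<in> space lborel. \<not> (Re (k \<xi>) = 0 \<and> \<xi> \<noteq> 0)} = UNIV"
    using Re_k_pos by force
  then have "\<not> (AE \<xi> in lborel. Re (k \<xi>) = 0 \<and> \<xi> \<noteq> 0)"
    by (subst AE_iff_measurable) auto
  then have "\<not> (AE \<xi> in lborel. Re (k \<xi>) = 0)"
    using AE_lborel_singleton[of 0] AE_conjI by blast
  then have "(LINT \<xi>|lborel. Re (k \<xi>)) \<noteq> 0"
    using integral_nonneg_eq_0_iff_AE[OF integrable_Re[OF k]] Re_k_nonneg by auto
  moreover have "0 \<le> (LINT \<xi>|lborel. Re (k \<xi>))"
    by (intro integral_nonneg_AE) (simp add: Re_k_nonneg)
  moreover have "Re (kernel_moment \<alpha> lam \<eta>) = (LINT \<xi>|lborel. Re (k \<xi>))"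
    using k unfolding kernel_moment_def k_def by (subst integral_Re) auto
  ultimately show ?thesis by simp
qed

end

section \<open>Square-integrable functions on a strip\<close>

text \<open>\<^const>\<open>L2R\<close> is defined with the completed Lebesgue measure on the strip \<open>S \<times> \<real>\<close>; Fubini is
  available for \<open>lborel \<Otimes>\<^sub>M lborel\<close>, so we pass to Borel representatives.\<close>

definition borel_L2R :: "real set \<Rightarrow> (real \<Rightarrow> real \<Rightarrow> complex) \<Rightarrow> bool" where
  "borel_L2R S h \<longleftrightarrow> S \<in> sets borel \<and>
     (\<lambda>p. h (fst p) (snd p)) \<in> borel_measurable (lborel \<Otimes>\<^sub>M lborel) \<and>
     integrable (lborel \<Otimes>\<^sub>M lborel) (\<lambda>p. indicator S (fst p) * (cmod (h (fst p) (snd p)))\<^sup>2)"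

lemma borel_L2RD:
  assumes "borel_L2R S h"
  shows "S \<in> sets borel" "(\<lambda>p. h (fst p) (snd p)) \<in> borel_measurable (lborel \<Otimes>\<^sub>M lborel)"
    "integrable (lborel \<Otimes>\<^sub>M lborel) (\<lambda>p. indicator S (fst p) * (cmod (h (fst p) (snd p)))\<^sup>2)"
  using assms unfolding borel_L2R_def by auto

lemma indicator_times_UNIV: "indicator (S \<times> UNIV) p = (indicator S (fst p) :: real)"
  by (cases p) (simp add: indicator_def)

lemma L2R_if_borel_L2R:
  assumes "borel_L2R {a..b} h"
  shows "L2R {a..b} h"
proof -
  have "{a..b} \<times> (UNIV::real set) \<in> sets borel"
    by (intro borel_closed closed_Times) auto
  moreover from this have "{a..b} \<times> (UNIV::real set) \<in> sets lebesgue"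
    by (intro sets_completionI_sets) simp
  ultimately have sets: "{a..b} \<times> (UNIV::real set) \<in> sets borel" "{a..b} \<times> (UNIV::real set) \<in> sets lebesgue"
    by blast+
  have hm: "(\<lambda>p. h (fst p) (snd p)) \<in> borel_measurable lborel"
    using borel_L2RD(2)[OF assms] by (simp add: lborel_prod)
  have "integrable lborel (\<lambda>p. indicator ({a..b} \<times> UNIV) p *\<^sub>R (cmod (h (fst p) (snd p)))\<^sup>2)"
    using borel_L2RD(3)[OF assms] by (simp add: lborel_prod indicator_times_UNIV)
  then have "integrable lebesgue (\<lambda>p. indicator ({a..b} \<times> UNIV) p *\<^sub>R (cmod (h (fst p) (snd p)))\<^sup>2)"
    by (subst integrable_completion) (use hm sets in measurable)
  then have "integrable (lebesgue_on ({a..b} \<times> UNIV)) (\<lambda>p. (cmod (h (fst p) (snd p)))\<^sup>2)"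
    using sets by (subst integrable_restrict_space) auto
  moreover have "(\<lambda>p. h (fst p) (snd p)) \<in> borel_measurable (lebesgue_on ({a..b} \<times> UNIV))"
    by (rule measurable_restrict_space1[OF measurable_completion[OF hm]])
  ultimately show ?thesis unfolding L2R_def by blast
qed

lemma L2R_borel_representative:
  fixes f :: "real \<Rightarrow> real \<Rightarrow> complex"
  assumes f: "L2R {a..b} f"
  obtains f' where "borel_L2R {a..b} f'"
    and "AE p in lebesgue_on ({a..b} \<times> UNIV). f (fst p) (snd p) = f' (fst p) (snd p)"
proof -
  have "{a..b} \<times> (UNIV::real set) \<in> sets borel"
    by (intro borel_closed closed_Times) auto
  moreover from this have "{a..b} \<times> (UNIV::real set) \<in> sets lebesgue"
    by (intro sets_completionI_sets) simp
  ultimately have sets: "{a..b} \<times> (UNIV::real set) \<in> sets borel" "{a..b} \<times> (UNIV::real set) \<in> sets lebesgue"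
    by blast+
  define F where "F p = indicator ({a..b} \<times> UNIV) p *\<^sub>R f (fst p) (snd p)" for p
  have "F \<in> borel_measurable lebesgue"
    using f sets unfolding L2R_def F_def by (subst (asm) borel_measurable_restrict_space_iff) auto
  then obtain G where Gm [measurable]: "G \<in> borel_measurable lborel" and "AE p in lborel. F p = G p"
    by (metis completion_ex_borel_measurable_complex)
  then have FG: "AE p in lebesgue. F p = G p" by (intro AE_completion)
  define f' where "f' x \<xi> = G (x, \<xi>)" for x \<xi>
  have "(\<lambda>p. indicator ({a..b} \<times> UNIV) p * (cmod (G p))\<^sup>2) \<in> borel_measurable lborel"
    using sets(1) by measurable
  then have mIG: "(\<lambda>p. indicator {a..b} (fst p) * (cmod (G p))\<^sup>2) \<in> borel_measurable lborel"
    by (simp add: indicator_times_UNIV)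
  have "integrable lebesgue (\<lambda>p. indicator ({a..b} \<times> UNIV) p *\<^sub>R (cmod (f (fst p) (snd p)))\<^sup>2)"
    using f sets unfolding L2R_def by (subst (asm) integrable_restrict_space) auto
  then have "integrable lebesgue (\<lambda>p. indicator {a..b} (fst p) * (cmod (G p))\<^sup>2)"
  proof (rule integrable_cong_AE_imp)
    show "(\<lambda>p. indicator {a..b} (fst p) * (cmod (G p))\<^sup>2) \<in> borel_measurable lebesgue"
      by (rule measurable_completion[OF mIG])
    show "AE p in lebesgue. indicator ({a..b} \<times> UNIV) p *\<^sub>R (cmod (f (fst p) (snd p)))\<^sup>2
        = indicator {a..b} (fst p) * (cmod (G p))\<^sup>2"
      using FG by eventually_elim (auto simp: F_def indicator_def)
  qed
  then have "integrable lborel (\<lambda>p. indicator {a..b} (fst p) * (cmod (G p))\<^sup>2)"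
    by (subst (asm) integrable_completion[OF mIG])
  then have "borel_L2R {a..b} f'"
    unfolding borel_L2R_def lborel_prod f'_def by simp
  moreover have "AE p in lebesgue_on ({a..b} \<times> UNIV). f (fst p) (snd p) = f' (fst p) (snd p)"
  proof (subst AE_restrict_space_iff)
    show "{a..b} \<times> (UNIV::real set) \<inter> space lebesgue \<in> sets lebesgue"
      using sets(2) by simp
    show "AE p in lebesgue. p \<in> {a..b} \<times> UNIV \<longrightarrow> f (fst p) (snd p) = f' (fst p) (snd p)"
      using FG by eventually_elim (auto simp: F_def f'_def)
  qed
  ultimately show ?thesis by (rule that)
qed

lemma borel_L2R_add:
  assumes f: "borel_L2R S f" and g: "borel_L2R S g"
  shows "borel_L2R S (\<lambda>x \<xi>. f x \<xi> + g x \<xi>)"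
  unfolding borel_L2R_def
proof (intro conjI)
  note [measurable] = borel_L2RD(1,2)[OF f] borel_L2RD(2)[OF g]
  show "S \<in> sets borel" by measurable
  show "(\<lambda>p. f (fst p) (snd p) + g (fst p) (snd p)) \<in> borel_measurable (lborel \<Otimes>\<^sub>M lborel)"
    by measurable
  have "integrable (lborel \<Otimes>\<^sub>M lborel) (\<lambda>p. 2 * (indicator S (fst p) * (cmod (f (fst p) (snd p)))\<^sup>2)
      + 2 * (indicator S (fst p) * (cmod (g (fst p) (snd p)))\<^sup>2))"
    using borel_L2RD(3)[OF f] borel_L2RD(3)[OF g]
    by (intro Bochner_Integration.integrable_add integrable_mult_right)
  then show "integrable (lborel \<Otimes>\<^sub>M lborel)
      (\<lambda>p. indicator S (fst p) * (cmod (f (fst p) (snd p) + g (fst p) (snd p)))\<^sup>2)"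
    by (rule Bochner_Integration.integrable_bound)
      (use norm_add_square_le in \<open>auto intro!: AE_I2 simp: indicator_def\<close>)
qed

lemma borel_L2R_mult_bounded:
  assumes f: "borel_L2R S f" and k: "k \<in> borel_measurable borel" "\<And>\<xi>. cmod (k \<xi>) \<le> K"
  shows "borel_L2R S (\<lambda>x \<xi>. f x \<xi> * k \<xi>)"
  unfolding borel_L2R_def
proof (intro conjI)
  note [measurable] = borel_L2RD(1,2)[OF f] k(1)
  show "S \<in> sets borel" by measurable
  show "(\<lambda>p. f (fst p) (snd p) * k (snd p)) \<in> borel_measurable (lborel \<Otimes>\<^sub>M lborel)" by measurable
  have "integrable (lborel \<Otimes>\<^sub>M lborel) (\<lambda>p. K\<^sup>2 * (indicator S (fst p) * (cmod (f (fst p) (snd p)))\<^sup>2))"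
    using borel_L2RD(3)[OF f] by (rule integrable_mult_right)
  then show "integrable (lborel \<Otimes>\<^sub>M lborel) (\<lambda>p. indicator S (fst p) * (cmod (f (fst p) (snd p) * k (snd p)))\<^sup>2)"
  proof (rule Bochner_Integration.integrable_bound)
    have "(cmod (f x \<xi> * k \<xi>))\<^sup>2 \<le> K\<^sup>2 * (cmod (f x \<xi>))\<^sup>2" for x \<xi>
    proof -
      have "(cmod (k \<xi>))\<^sup>2 \<le> K\<^sup>2"
        using k(2)[of \<xi>] by (intro power_mono) auto
      from mult_left_mono[OF this, of "(cmod (f x \<xi>))\<^sup>2"] show ?thesis
        by (simp add: norm_mult power_mult_distrib mult.commute)
    qed
    then show "AE p in lborel \<Otimes>\<^sub>M lborel. norm (indicator S (fst p) * (cmod (f (fst p) (snd p) * k (snd p)))\<^sup>2)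
        \<le> norm (K\<^sup>2 * (indicator S (fst p) * (cmod (f (fst p) (snd p)))\<^sup>2))"
      by (intro AE_I2) (auto simp: indicator_def)
  qed measurable
qed

lemma borel_L2R_cmult:
  assumes "borel_L2R S f"
  shows "borel_L2R S (\<lambda>x \<xi>. c * f x \<xi>)"
  using borel_L2R_mult_bounded[OF assms, of "\<lambda>_. c" "cmod c"] by (simp add: mult.commute)

lemma borel_L2R_tensor:
  assumes S: "S \<in> sets borel" "emeasure lborel S < \<infinity>"
    and U: "U \<in> borel_measurable borel" "\<And>x. x \<in> S \<Longrightarrow> cmod (U x) \<le> K"
    and g: "g \<in> borel_measurable borel" "integrable lborel (\<lambda>\<xi>. (cmod (g \<xi>))\<^sup>2)"
  shows "borel_L2R S (\<lambda>x \<xi>. U x * g \<xi>)"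
  unfolding borel_L2R_def
proof (intro conjI)
  note [measurable] = S(1) U(1) g(1)
  show "S \<in> sets borel" by measurable
  show "(\<lambda>p. U (fst p) * g (snd p)) \<in> borel_measurable (lborel \<Otimes>\<^sub>M lborel)" by measurable
  have "integrable lborel (\<lambda>x. K\<^sup>2 * indicator S x :: real)"
    using S by (intro integrable_mult_right integrable_real_indicator) auto
  then have "integrable (lborel \<Otimes>\<^sub>M lborel) (\<lambda>p. (K\<^sup>2 * indicator S (fst p)) * (cmod (g (snd p)))\<^sup>2)"
    using g(2) by (rule lborel_pair.integrable_tensor_product)
  then show "integrable (lborel \<Otimes>\<^sub>M lborel) (\<lambda>p. indicator S (fst p) * (cmod (U (fst p) * g (snd p)))\<^sup>2)"
  proof (rule Bochner_Integration.integrable_bound)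
    have "indicator S x * (cmod (U x))\<^sup>2 \<le> K\<^sup>2 * indicator S x" for x
      using U(2)[of x] by (auto simp: indicator_def intro!: power_mono)
    then show "AE p in lborel \<Otimes>\<^sub>M lborel. norm (indicator S (fst p) * (cmod (U (fst p) * g (snd p)))\<^sup>2)
        \<le> norm ((K\<^sup>2 * indicator S (fst p)) * (cmod (g (snd p)))\<^sup>2)"
      by (intro AE_I2) (auto simp: norm_mult power_mult_distrib mult.assoc[symmetric] intro!: mult_right_mono)
  qed measurable
qed

lemma integrable_mult_if_square_integrable:
  fixes a b :: "'a \<Rightarrow> complex"
  assumes "a \<in> borel_measurable M" "b \<in> borel_measurable M"
    and "integrable M (\<lambda>x. (cmod (a x))\<^sup>2)" "integrable M (\<lambda>x. (cmod (b x))\<^sup>2)"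
  shows "integrable M (\<lambda>x. a x * b x)"
proof (rule Bochner_Integration.integrable_bound)
  show "integrable M (\<lambda>x. (cmod (a x))\<^sup>2 + (cmod (b x))\<^sup>2)"
    using assms(3,4) by (rule Bochner_Integration.integrable_add)
  show "(\<lambda>x. a x * b x) \<in> borel_measurable M"
    using assms(1,2) by measurable
  have "cmod (a x) * cmod (b x) \<le> (cmod (a x))\<^sup>2 + (cmod (b x))\<^sup>2" for x
  proof -
    have "2 * (cmod (a x) * cmod (b x)) \<le> (cmod (a x))\<^sup>2 + (cmod (b x))\<^sup>2"
      using zero_le_power2[of "cmod (a x) - cmod (b x)"] by (simp add: power2_eq_square algebra_simps)
    moreover have "0 \<le> cmod (a x) * cmod (b x)" by simp
    ultimately show ?thesis by linarith
  qed
  then show "AE x in M. norm (a x * b x) \<le> norm ((cmod (a x))\<^sup>2 + (cmod (b x))\<^sup>2)"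
    by (intro AE_I2) (simp add: norm_mult)
qed

lemma Cauchy_Schwarz_integral:
  fixes a b :: "'a \<Rightarrow> complex"
  assumes am: "a \<in> borel_measurable M" and bm: "b \<in> borel_measurable M"
    and ai: "integrable M (\<lambda>x. (cmod (a x))\<^sup>2)" and bi: "integrable M (\<lambda>x. (cmod (b x))\<^sup>2)"
  shows "(cmod (\<integral>x. a x * b x \<partial>M))\<^sup>2 \<le> (\<integral>x. (cmod (a x))\<^sup>2 \<partial>M) * (\<integral>x. (cmod (b x))\<^sup>2 \<partial>M)"
proof -
  have abn: "integrable M (\<lambda>x. cmod (a x) * cmod (b x))"
    using integrable_norm[OF integrable_mult_if_square_integrable[OF assms]] by (simp add: norm_mult)
  define X where "X = (\<integral>x. cmod (a x) * cmod (b x) \<partial>M)"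
  define A where "A = (\<integral>x. (cmod (a x))\<^sup>2 \<partial>M)"
  define B where "B = (\<integral>x. (cmod (b x))\<^sup>2 \<partial>M)"
  have nonneg: "0 \<le> X" "0 \<le> A" "0 \<le> B"
    unfolding X_def A_def B_def by (auto intro!: integral_nonneg_AE)
  have "(\<integral>\<^sup>+ x. ennreal (cmod (a x) * cmod (b x)) \<partial>M) = ennreal X"
    unfolding X_def by (rule nn_integral_eq_integral[OF abn]) auto
  then have eX: "ennreal X = (\<integral>\<^sup>+ x. ennreal (cmod (a x)) * ennreal (cmod (b x)) \<partial>M)"
    by (simp add: ennreal_mult)
  have "(\<integral>\<^sup>+ x. ennreal ((cmod (a x))\<^sup>2) \<partial>M) = ennreal A"
    unfolding A_def by (rule nn_integral_eq_integral[OF ai]) auto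
  then have eA: "ennreal A = (\<integral>\<^sup>+ x. (ennreal (cmod (a x)))\<^sup>2 \<partial>M)"
    by (simp add: ennreal_power)
  have "(\<integral>\<^sup>+ x. ennreal ((cmod (b x))\<^sup>2) \<partial>M) = ennreal B"
    unfolding B_def by (rule nn_integral_eq_integral[OF bi]) auto
  then have eB: "ennreal B = (\<integral>\<^sup>+ x. (ennreal (cmod (b x)))\<^sup>2 \<partial>M)"
    by (simp add: ennreal_power)
  have "(ennreal X)\<^sup>2 \<le> ennreal A * ennreal B"
    unfolding eX eA eB by (rule Cauchy_Schwarz_nn_integral) (use am bm in measurable)
  then have "ennreal (X\<^sup>2) \<le> ennreal (A * B)"
    using nonneg by (simp add: ennreal_power ennreal_mult)
  then have "X\<^sup>2 \<le> A * B" using nonneg by (simp add: ennreal_le_iff)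
  moreover have "(cmod (\<integral>x. a x * b x \<partial>M))\<^sup>2 \<le> X\<^sup>2"
    unfolding X_def using integral_norm_bound[of M "\<lambda>x. a x * b x"]
    by (intro power_mono) (auto simp: norm_mult)
  ultimately show ?thesis unfolding A_def B_def by linarith
qed

lemma L2_integral_mult_borel_L2R:
  assumes h: "borel_L2R {a..b} h" and g: "g \<in> borel_measurable borel" "integrable lborel (\<lambda>\<xi>. (cmod (g \<xi>))\<^sup>2)"
  shows "L2 {a..b} (\<lambda>x. LINT \<xi>|lborel. h x \<xi> * g \<xi>)"
proof -
  define F where "F x = (LINT \<xi>|lborel. h x \<xi> * g \<xi>)" for x
  define H where "H x = (LINT \<xi>|lborel. (cmod (h x \<xi>))\<^sup>2)" for x
  define G where "G = (LINT \<xi>|lborel. (cmod (g \<xi>))\<^sup>2)"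
  note [measurable] = borel_L2RD(2)[OF h] g(1)
  have Fm [measurable]: "F \<in> borel_measurable lborel"
    unfolding F_def by (rule lborel.borel_measurable_lebesgue_integral) measurable
  have int: "integrable lborel (\<lambda>x. G * (indicator {a..b} x * H x))"
    using lborel_pair.integrable_fst'[OF borel_L2RD(3)[OF h]] unfolding H_def
    by (intro integrable_mult_right) simp
  moreover have "AE x in lborel. x \<in> {a..b} \<longrightarrow> integrable lborel (\<lambda>\<xi>. (cmod (h x \<xi>))\<^sup>2)"
    using lborel_pair.AE_integrable_fst'[OF borel_L2RD(3)[OF h]]
    by eventually_elim (simp add: indicator_def)
  then have bound: "AE x in lborel. norm (indicator {a..b} x * (cmod (F x))\<^sup>2) \<le> norm (G * (indicator {a..b} x * H x))"
  proof eventually_elim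
    case (elim x)
    show ?case
    proof (cases "x \<in> {a..b}")
      case True
      have "(\<lambda>\<xi>. h x \<xi>) \<in> borel_measurable lborel"
        using measurable_Pair2[OF borel_L2RD(2)[OF h], of x] by simp
      then have "(cmod (F x))\<^sup>2 \<le> H x * G"
        unfolding F_def H_def G_def using True elim g
        by (intro Cauchy_Schwarz_integral) (auto simp: measurable_lborel2)
      moreover have "0 \<le> H x" "0 \<le> G" unfolding H_def G_def by (auto intro!: integral_nonneg_AE)
      ultimately show ?thesis using True by (simp add: mult.commute)
    qed simp
  qed
  have "integrable lborel (\<lambda>x. indicator {a..b} x * (cmod (F x))\<^sup>2)"
    by (rule Bochner_Integration.integrable_bound[OF int _ bound]) measurable
  then have "integrable lebesgue (\<lambda>x. indicator {a..b} x *\<^sub>R (cmod (F x))\<^sup>2)"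
    by (subst integrable_completion) (auto simp: measurable_lborel2)
  then have "integrable (lebesgue_on {a..b}) (\<lambda>x. (cmod (F x))\<^sup>2)"
    by (subst integrable_restrict_space) auto
  moreover have "F \<in> borel_measurable (lebesgue_on {a..b})"
    by (rule measurable_restrict_space1[OF measurable_completion[OF Fm]])
  ultimately show ?thesis unfolding L2_def F_def by blast
qed

lemma L2R_cong:
  assumes "L2R S h" "\<And>x \<xi>. x \<in> S \<Longrightarrow> h x \<xi> = h' x \<xi>"
  shows "L2R S h'"
proof -
  have "\<And>p. p \<in> space (lebesgue_on (S \<times> (UNIV::real set))) \<Longrightarrow> h (fst p) (snd p) = h' (fst p) (snd p)"
    using assms(2) by auto
  then show ?thesis
    using assms(1) unfolding L2R_def
    by (metis (no_types, lifting) Bochner_Integration.integrable_cong measurable_cong)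
qed

section \<open>Elimination of the memory variable\<close>

text \<open>\<open>U\<close> is cut off outside \<open>S\<close> so that the solution is Borel measurable on the whole plane.\<close>

definition memory_solution ::
  "real \<Rightarrow> real \<Rightarrow> real \<Rightarrow> real set \<Rightarrow> (real \<Rightarrow> real \<Rightarrow> complex) \<Rightarrow> (real \<Rightarrow> complex) \<Rightarrow> real \<Rightarrow> real \<Rightarrow> complex"
where
  "memory_solution \<alpha> lam \<eta> S f U x \<xi> =
     f x \<xi> * (1 / resolvent_den lam \<eta> \<xi>) + (indicator S x *\<^sub>R U x) * resolvent_kernel \<alpha> lam \<eta> \<xi>"

context
  fixes \<alpha> lam \<eta> :: real
  assumes \<alpha>: "0 < \<alpha>" "\<alpha> < 1" and \<eta>: "0 \<le> \<eta>" and nondeg: "lam \<noteq> 0 \<or> 0 < \<eta>"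
begin

lemma resolvent_den_mult_memory_solution:
  assumes "x \<in> S"
  shows "resolvent_den lam \<eta> \<xi> * memory_solution \<alpha> lam \<eta> S f U x \<xi> = f x \<xi> + of_real (mu \<alpha> \<xi>) * U x"
  using assms resolvent_den_nonzero[OF \<alpha> \<eta> nondeg, of \<xi>]
  by (simp add: memory_solution_def resolvent_kernel_def field_simps)

lemma memory_solution_equation:
  assumes "x \<in> S"
  shows "\<i> * of_real lam * memory_solution \<alpha> lam \<eta> S f U x \<xi>
    - (- of_real (\<xi>\<^sup>2 + \<eta>) * memory_solution \<alpha> lam \<eta> S f U x \<xi> + of_real (mu \<alpha> \<xi>) * U x) = f x \<xi>"
  using resolvent_den_mult_memory_solution[OF assms, of \<xi> f U]
  by (simp add: resolvent_den_def algebra_simps)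

lemma memory_solution_AE_equation:
  assumes "AE z in lebesgue_on (S \<times> UNIV). f5 (fst z) (snd z) = f (fst z) (snd z)"
  shows "AE z in lebesgue_on (S \<times> UNIV). \<i> * of_real lam * memory_solution \<alpha> lam \<eta> S f U (fst z) (snd z)
    - (- of_real ((snd z)\<^sup>2 + \<eta>) * memory_solution \<alpha> lam \<eta> S f U (fst z) (snd z)
       + of_real (mu \<alpha> (snd z)) * U (fst z)) = f5 (fst z) (snd z)"
  using assms AE_space[of "lebesgue_on (S \<times> UNIV)"]
proof eventually_elim
  case (elim z)
  then have "fst z \<in> S" by auto
  from memory_solution_equation[OF this, where \<xi> = "snd z" and f = f and U = U]
  show ?case using elim(1) by simp
qed

lemma memory_solution_L2R:
  assumes f: "borel_L2R {p..q} f" and U: "continuous_on {p..q} U"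
  defines "\<phi> \<equiv> memory_solution \<alpha> lam \<eta> {p..q} f U"
  shows "L2R {p..q} \<phi>" "L2R {p..q} (\<lambda>x \<xi>. of_real \<bar>\<xi>\<bar> * \<phi> x \<xi>)"
    and "L2R {p..q} (\<lambda>x \<xi>. - of_real (\<xi>\<^sup>2 + \<eta>) * \<phi> x \<xi> + of_real (mu \<alpha> \<xi>) * U x)"
proof -
  define U' where "U' x = indicator {p..q} x *\<^sub>R U x" for x
  have U'm: "U' \<in> borel_measurable borel"
    unfolding U'_def by (rule borel_measurable_continuous_on_indicator[OF _ U]) simp
  obtain K where K: "\<And>x. x \<in> {p..q} \<Longrightarrow> cmod (U x) \<le> K"
    using compact_imp_bounded[OF compact_continuous_image[OF U compact_Icc]] unfolding bounded_iff by blast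
  then have U'K: "cmod (U' x) \<le> K" if "x \<in> {p..q}" for x
    using that by (simp add: U'_def)
  obtain B where B: "\<And>\<xi>. cmod (1 / resolvent_den lam \<eta> \<xi>) \<le> B"
    "\<And>\<xi>. cmod (of_real \<bar>\<xi>\<bar> / resolvent_den lam \<eta> \<xi>) \<le> B"
    using resolvent_den_multiplier_bound[OF \<alpha> \<eta> nondeg] by metis
  have "borel_L2R {p..q} (\<lambda>x \<xi>. f x \<xi> * (1 / resolvent_den lam \<eta> \<xi>) + U' x * resolvent_kernel \<alpha> lam \<eta> \<xi>)"
    by (intro borel_L2R_add borel_L2R_mult_bounded[OF f _ B(1)] borel_L2R_tensor[OF _ _ U'm U'K]
        integrable_resolvent_kernel_square[OF \<alpha> \<eta> nondeg]) (auto simp: emeasure_lborel_Icc_eq)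
  then have \<phi>: "borel_L2R {p..q} \<phi>"
    by (simp add: \<phi>_def memory_solution_def[abs_def] U'_def)
  then show "L2R {p..q} \<phi>" by (rule L2R_if_borel_L2R)
  have "borel_L2R {p..q} (\<lambda>x \<xi>. f x \<xi> * (of_real \<bar>\<xi>\<bar> / resolvent_den lam \<eta> \<xi>)
      + U' x * (of_real \<bar>\<xi>\<bar> * resolvent_kernel \<alpha> lam \<eta> \<xi>))"
    by (intro borel_L2R_add borel_L2R_mult_bounded[OF f _ B(2)] borel_L2R_tensor[OF _ _ U'm U'K]
        integrable_abs_mult_resolvent_kernel_square[OF \<alpha> \<eta> nondeg]) (auto simp: emeasure_lborel_Icc_eq)
  then have "borel_L2R {p..q} (\<lambda>x \<xi>. of_real \<bar>\<xi>\<bar> * \<phi> x \<xi>)"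
    by (simp add: \<phi>_def memory_solution_def U'_def algebra_simps)
  then show "L2R {p..q} (\<lambda>x \<xi>. of_real \<bar>\<xi>\<bar> * \<phi> x \<xi>)" by (rule L2R_if_borel_L2R)
  have "borel_L2R {p..q} (\<lambda>x \<xi>. \<i> * of_real lam * \<phi> x \<xi> + (-1) * f x \<xi>)"
    by (intro borel_L2R_add borel_L2R_cmult \<phi> f)
  then have "L2R {p..q} (\<lambda>x \<xi>. \<i> * of_real lam * \<phi> x \<xi> + (-1) * f x \<xi>)" by (rule L2R_if_borel_L2R)
  then show "L2R {p..q} (\<lambda>x \<xi>. - of_real (\<xi>\<^sup>2 + \<eta>) * \<phi> x \<xi> + of_real (mu \<alpha> \<xi>) * U x)"
  proof (rule L2R_cong)
    fix x \<xi> assume "x \<in> {p..q}"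
    from memory_solution_equation[OF this, where \<xi> = \<xi> and f = f and U = U]
    show "\<i> * of_real lam * \<phi> x \<xi> + (-1) * f x \<xi> = - of_real (\<xi>\<^sup>2 + \<eta>) * \<phi> x \<xi> + of_real (mu \<alpha> \<xi>) * U x"
      unfolding \<phi>_def by (simp add: algebra_simps)
  qed
qed

lemma integral_mu_mult_memory_solution:
  assumes f: "borel_L2R {p..q} f"
  shows "AE x in lebesgue_on {p..q}.
    integral\<^sup>L lebesgue (\<lambda>\<xi>. of_real (mu \<alpha> \<xi>) * memory_solution \<alpha> lam \<eta> {p..q} f U x \<xi>)
      = (LINT \<xi>|lborel. f x \<xi> * resolvent_kernel \<alpha> lam \<eta> \<xi>) + kernel_moment \<alpha> lam \<eta> * U x"
proof -
  have "AE x in lborel. x \<in> {p..q} \<longrightarrow> integrable lborel (\<lambda>\<xi>. (cmod (f x \<xi>))\<^sup>2)"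
    using lborel_pair.AE_integrable_fst'[OF borel_L2RD(3)[OF f]]
    by eventually_elim (simp add: indicator_def)
  then have "AE x in lebesgue. x \<in> {p..q} \<longrightarrow> integrable lborel (\<lambda>\<xi>. (cmod (f x \<xi>))\<^sup>2)"
    by (rule AE_completion)
  then have "AE x in lebesgue_on {p..q}. integrable lborel (\<lambda>\<xi>. (cmod (f x \<xi>))\<^sup>2)"
    by (subst AE_restrict_space_iff) auto
  then show ?thesis
    using AE_space[of "lebesgue_on {p..q}"]
  proof eventually_elim
    case (elim x)
    then have x: "x \<in> {p..q}" by simp
    have fx: "integrable lborel (\<lambda>\<xi>. f x \<xi> * resolvent_kernel \<alpha> lam \<eta> \<xi>)"
    proof (rule integrable_mult_if_square_integrable)
      show "(\<lambda>\<xi>. f x \<xi>) \<in> borel_measurable lborel"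
        using measurable_Pair2[OF borel_L2RD(2)[OF f], of x] by simp
    qed (use elim integrable_resolvent_kernel_square[OF \<alpha> \<eta> nondeg] in \<open>auto simp: measurable_lborel2\<close>)
    have k: "integrable lborel (\<lambda>\<xi>. U x * (of_real (mu \<alpha> \<xi>) * resolvent_kernel \<alpha> lam \<eta> \<xi>))"
      by (intro integrable_mult_right integrable_mu_mult_resolvent_kernel[OF \<alpha> \<eta> nondeg])
    have "integral\<^sup>L lebesgue (\<lambda>\<xi>. of_real (mu \<alpha> \<xi>) * memory_solution \<alpha> lam \<eta> {p..q} f U x \<xi>)
        = integral\<^sup>L lebesgue (\<lambda>\<xi>. f x \<xi> * resolvent_kernel \<alpha> lam \<eta> \<xi>
            + U x * (of_real (mu \<alpha> \<xi>) * resolvent_kernel \<alpha> lam \<eta> \<xi>))"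
      using x by (simp add: memory_solution_def resolvent_kernel_def algebra_simps)
    also have "\<dots> = (LINT \<xi>|lborel. f x \<xi> * resolvent_kernel \<alpha> lam \<eta> \<xi>
        + U x * (of_real (mu \<alpha> \<xi>) * resolvent_kernel \<alpha> lam \<eta> \<xi>))"
      using fx k by (intro integral_completion borel_measurable_add borel_measurable_integrable)
    also have "\<dots> = (LINT \<xi>|lborel. f x \<xi> * resolvent_kernel \<alpha> lam \<eta> \<xi>) + kernel_moment \<alpha> lam \<eta> * U x"
      using fx k by (simp add: kernel_moment_def mult.commute)
    finally show ?case .
  qed
qed

end

section \<open>Reduction to the transmission problem\<close>

lemma Cfrak_pos: "0 < \<alpha> \<Longrightarrow> \<alpha> < 1 \<Longrightarrow> 0 < Cfrak \<alpha>"
  unfolding Cfrak_def by (intro divide_pos_pos sin_gt_zero) auto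

definition string_coeff :: "real \<Rightarrow> real \<Rightarrow> real \<Rightarrow> real \<Rightarrow> real \<Rightarrow> complex" where
  "string_coeff \<rho> k \<alpha> \<eta> lam =
     \<i> * of_real lam * (\<i> * of_real lam * of_real \<rho> + of_real (Cfrak \<alpha>) * kernel_moment \<alpha> lam \<eta>) / of_real k"

lemma Im_mult_string_coeff:
  assumes "k \<noteq> 0"
  shows "Im (of_real k * string_coeff \<rho> k \<alpha> \<eta> lam) = lam * Cfrak \<alpha> * Re (kernel_moment \<alpha> lam \<eta>)"
  using assms by (simp add: string_coeff_def algebra_simps)

lemma string_coeffs_nondegenerate:
  fixes \<rho>1 \<rho>2 :: real
  assumes "k1 > 0" "k2 > 0" "0 < \<alpha>" "\<alpha> < 1" "0 \<le> \<eta>" "lam \<noteq> 0 \<or> 0 < \<eta>"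
  defines "a1 \<equiv> string_coeff \<rho>1 k1 \<alpha> \<eta> lam" and "a2 \<equiv> string_coeff \<rho>2 k2 \<alpha> \<eta> lam"
  shows "(a1 = 0 \<and> a2 = 0) \<or> (Im (of_real k1 * a1) = Im (of_real k2 * a2) \<and> Im (of_real k1 * a1) \<noteq> 0)"
proof (cases "lam = 0")
  case False
  have nz: "lam * Cfrak \<alpha> * Re (kernel_moment \<alpha> lam \<eta>) \<noteq> 0"
    using False Cfrak_pos[OF assms(3,4)] kernel_moment_Re_pos[OF assms(3-6)] by simp
  have "Im (of_real k1 * a1) = lam * Cfrak \<alpha> * Re (kernel_moment \<alpha> lam \<eta>)"
    "Im (of_real k2 * a2) = lam * Cfrak \<alpha> * Re (kernel_moment \<alpha> lam \<eta>)"
    unfolding a1_def a2_def using assms(1,2) by (intro Im_mult_string_coeff; simp)+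
  then show ?thesis using nz by (simp only: simp_thms)
qed (simp add: a1_def a2_def string_coeff_def)

text \<open>The conditions of \<^const>\<open>resolvent_solution\<close> that concern one string \<open>[p, q]\<close>; \<open>g\<close> is the
  continuous representative of \<open>u'\<close>, which enters the transmission condition.\<close>

definition string_solution ::
  "real \<Rightarrow> real \<Rightarrow> real \<Rightarrow> real \<Rightarrow> real \<Rightarrow> real \<Rightarrow> real \<Rightarrow>
   (real \<Rightarrow> complex) \<Rightarrow> (real \<Rightarrow> complex) \<Rightarrow> (real \<Rightarrow> real \<Rightarrow> complex) \<Rightarrow>
   (real \<Rightarrow> complex) \<Rightarrow> (real \<Rightarrow> complex) \<Rightarrow> (real \<Rightarrow> complex) \<Rightarrow> (real \<Rightarrow> real \<Rightarrow> complex) \<Rightarrow> bool"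
where
  "string_solution \<rho> k p q \<alpha> \<eta> lam f1 f3 f5 u g U \<phi> \<longleftrightarrow>
     H1 p q u \<and> H1 p q U \<and> L2R {p..q} \<phi> \<and> has_weak_deriv p q u g \<and>
     (\<exists>h. has_weak_deriv p q g h \<and>
        (AE x in lebesgue_on {p..q}. \<i> * of_real lam * U x
          - (of_real k * h x - of_real (Cfrak \<alpha>) *
               integral\<^sup>L lebesgue (\<lambda>\<xi>. of_real (mu \<alpha> \<xi>) * \<phi> x \<xi>)) / of_real \<rho> = f3 x)) \<and>
     L2R {p..q} (\<lambda>x \<xi>. of_real \<bar>\<xi>\<bar> * \<phi> x \<xi>) \<and>
     L2R {p..q} (\<lambda>x \<xi>. - of_real (\<xi>\<^sup>2 + \<eta>) * \<phi> x \<xi> + of_real (mu \<alpha> \<xi>) * U x) \<and>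
     (\<forall>x\<in>{p..q}. \<i> * of_real lam * u x - U x = f1 x) \<and>
     (AE z in lebesgue_on ({p..q} \<times> UNIV). \<i> * of_real lam * \<phi> (fst z) (snd z)
        - (- of_real ((snd z)\<^sup>2 + \<eta>) * \<phi> (fst z) (snd z) + of_real (mu \<alpha> (snd z)) * U (fst z))
        = f5 (fst z) (snd z))"

lemma resolvent_solution_if_string_solutions:
  assumes f: "in_H L f1 f2 f3 f4 f5 f6" and L: "0 < L"
    and left: "string_solution \<rho>1 k1 (-L) 0 \<alpha> \<eta> lam f1 f3 f5 u g1 U \<phi>1"
    and right: "string_solution \<rho>2 k2 0 L \<alpha> \<eta> lam f2 f4 f6 v g2 V \<phi>2"
    and bc: "u (-L) = 0" "v L = 0" "u 0 = v 0" "of_real k1 * g1 0 = of_real k2 * g2 0"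
  shows "resolvent_solution \<rho>1 \<rho>2 k1 k2 L \<alpha> \<eta> lam f1 f2 f3 f4 f5 f6 u v U V \<phi>1 \<phi>2"
proof -
  have fbc: "f1 (-L) = 0" "f2 L = 0" "f1 0 = f2 0"
    using f unfolding in_H_def H10_def by auto
  obtain h1 h2 where h1: "has_weak_deriv (-L) 0 g1 h1" and h2: "has_weak_deriv 0 L g2 h2"
    and eq1: "AE x in lebesgue_on {-L..0}. \<i> * of_real lam * U x
          - (of_real k1 * h1 x - of_real (Cfrak \<alpha>) *
               integral\<^sup>L lebesgue (\<lambda>\<xi>. of_real (mu \<alpha> \<xi>) * \<phi>1 x \<xi>)) / of_real \<rho>1 = f3 x"
    and eq2: "AE x in lebesgue_on {0..L}. \<i> * of_real lam * V x
          - (of_real k2 * h2 x - of_real (Cfrak \<alpha>) *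
               integral\<^sup>L lebesgue (\<lambda>\<xi>. of_real (mu \<alpha> \<xi>) * \<phi>2 x \<xi>)) / of_real \<rho>2 = f4 x"
    using left right unfolding string_solution_def by blast
  have "\<forall>x\<in>{-L..0}. \<i> * of_real lam * u x - U x = f1 x" "\<forall>x\<in>{0..L}. \<i> * of_real lam * v x - V x = f2 x"
    using left right unfolding string_solution_def by blast+
  then have "\<i> * of_real lam * u (-L) - U (-L) = f1 (-L)" "\<i> * of_real lam * v L - V L = f2 L"
    "\<i> * of_real lam * u 0 - U 0 = f1 0" "\<i> * of_real lam * v 0 - V 0 = f2 0"
    using L by auto
  then have "U (-L) = 0" "V L = 0" "U 0 = V 0"
    using bc fbc by algebra+
  moreover have "L2 {-L..0} U" "L2 {0..L} V"
    using left right unfolding string_solution_def H1_def by blast+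
  ultimately show ?thesis
    using left right bc h1 h2 eq1 eq2
    unfolding resolvent_solution_def in_H_def H10_def string_solution_def
    by (intro conjI exI) auto
qed

lemma string_solution_if_ode_solution:
  assumes \<rho>: "0 < \<rho>" and k: "0 < k" and \<alpha>: "0 < \<alpha>" "\<alpha> < 1" and \<eta>: "0 \<le> \<eta>"
    and nondeg: "lam \<noteq> 0 \<or> 0 < \<eta>"
    and f1: "has_ac_deriv p q f1 g1" "L2 {p..q} f1" "L2 {p..q} g1"
    and f: "borel_L2R {p..q} f"
    and f5: "AE z in lebesgue_on ({p..q} \<times> UNIV). f5 (fst z) (snd z) = f (fst z) (snd z)"
    and r: "L2 {p..q} r"
    and r_eq: "\<And>x. of_real k * r x = - (\<i> * of_real lam * of_real \<rho> + of_real (Cfrak \<alpha>) * kernel_moment \<alpha> lam \<eta>) * f1 x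
      + of_real (Cfrak \<alpha>) * (LINT \<xi>|lborel. f x \<xi> * resolvent_kernel \<alpha> lam \<eta> \<xi>) - of_real \<rho> * f3 x"
    and u: "has_ac_deriv p q u g" and g: "has_ac_deriv p q g (\<lambda>x. string_coeff \<rho> k \<alpha> \<eta> lam * u x + r x)"
  defines "U \<equiv> \<lambda>x. \<i> * of_real lam * u x - f1 x"
  shows "string_solution \<rho> k p q \<alpha> \<eta> lam f1 f3 f5 u g U (memory_solution \<alpha> lam \<eta> {p..q} f U)"
proof -
  define \<phi> where "\<phi> = memory_solution \<alpha> lam \<eta> {p..q} f U"
  define h where "h x = string_coeff \<rho> k \<alpha> \<eta> lam * u x + r x" for x
  have cu: "continuous_on {p..q} u" and cg: "continuous_on {p..q} g"
    using u g by (auto intro: continuous_on_if_has_ac_deriv)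
  have cU: "continuous_on {p..q} U"
    unfolding U_def by (intro continuous_intros cu continuous_on_if_has_ac_deriv[OF f1(1)])
  have L2u: "L2 {p..q} u" and L2g: "L2 {p..q} g"
    using cu cg by (auto intro: L2_if_continuous_on)
  have L2U: "L2 {p..q} U"
    unfolding U_def by (intro L2_diff L2_cmult L2u f1(2))
  have "has_weak_deriv p q U (\<lambda>x. \<i> * of_real lam * g x - g1 x)"
    unfolding has_weak_deriv_iff U_def
    by (intro conjI L2_diff L2_cmult L2g f1(3) has_ac_deriv_diff has_ac_deriv_cmult u f1(1))
  then have H1U: "H1 p q U" using L2U unfolding H1_def by blast
  have hu: "has_weak_deriv p q u g" and hg: "has_weak_deriv p q g h"
    unfolding has_weak_deriv_iff h_def using L2g u g by (auto intro!: L2_add L2_cmult L2u r)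
  have memory: "AE x in lebesgue_on {p..q}.
      integral\<^sup>L lebesgue (\<lambda>\<xi>. of_real (mu \<alpha> \<xi>) * \<phi> x \<xi>)
        = (LINT \<xi>|lborel. f x \<xi> * resolvent_kernel \<alpha> lam \<eta> \<xi>) + kernel_moment \<alpha> lam \<eta> * U x"
    unfolding \<phi>_def by (rule integral_mu_mult_memory_solution[OF \<alpha> \<eta> nondeg f])
  have "AE x in lebesgue_on {p..q}. \<i> * of_real lam * U x
      - (of_real k * h x - of_real (Cfrak \<alpha>) * integral\<^sup>L lebesgue (\<lambda>\<xi>. of_real (mu \<alpha> \<xi>) * \<phi> x \<xi>))
        / of_real \<rho> = f3 x"
    using memory
  proof eventually_elim
    case (elim x)
    have "of_real k * h x = (\<i> * of_real lam * of_real \<rho> + of_real (Cfrak \<alpha>) * kernel_moment \<alpha> lam \<eta>) * U x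
        + of_real (Cfrak \<alpha>) * (LINT \<xi>|lborel. f x \<xi> * resolvent_kernel \<alpha> lam \<eta> \<xi>) - of_real \<rho> * f3 x"
      using k unfolding h_def distrib_left r_eq by (simp add: string_coeff_def U_def field_simps)
    then show ?case
      unfolding elim using \<rho> by (simp add: field_simps)
  qed
  moreover have "\<forall>x\<in>{p..q}. \<i> * of_real lam * u x - U x = f1 x"
    by (simp add: U_def)
  ultimately show ?thesis
    using memory_solution_L2R[OF \<alpha> \<eta> nondeg f cU] memory_solution_AE_equation[OF \<alpha> \<eta> nondeg f5, where U = U]
      H1U L2u hu hg
    unfolding string_solution_def H1_def \<phi>_def[symmetric] by blast
qed

lemma string_ode_reduction:
  assumes \<rho>: "0 < \<rho>" and k: "0 < k" and \<alpha>: "0 < \<alpha>" "\<alpha> < 1" and \<eta>: "0 \<le> \<eta>"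
    and nondeg: "lam \<noteq> 0 \<or> 0 < \<eta>"
    and f1: "H1 p q f1" and f3: "L2 {p..q} f3" and f5: "L2R {p..q} f5"
  obtains r where "r absolutely_integrable_on {p..q}"
    and "\<And>u g. has_ac_deriv p q u g \<Longrightarrow> has_ac_deriv p q g (\<lambda>x. string_coeff \<rho> k \<alpha> \<eta> lam * u x + r x) \<Longrightarrow>
      \<exists>U \<phi>. string_solution \<rho> k p q \<alpha> \<eta> lam f1 f3 f5 u g U \<phi>"
proof -
  obtain g1 where g1: "has_weak_deriv p q f1 g1" and L2f1: "L2 {p..q} f1"
    using f1 unfolding H1_def by blast
  obtain f where f: "borel_L2R {p..q} f"
    and ae: "AE z in lebesgue_on ({p..q} \<times> UNIV). f5 (fst z) (snd z) = f (fst z) (snd z)"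
    using L2R_borel_representative[OF f5] by blast
  define \<beta> where "\<beta> = \<i> * of_real lam * of_real \<rho> + of_real (Cfrak \<alpha>) * kernel_moment \<alpha> lam \<eta>"
  define F where "F x = (LINT \<xi>|lborel. f x \<xi> * resolvent_kernel \<alpha> lam \<eta> \<xi>)" for x
  define r where "r x = (- \<beta> / of_real k) * f1 x + (of_real (Cfrak \<alpha>) / of_real k) * F x
    + (- of_real \<rho> / of_real k) * f3 x" for x
  have "L2 {p..q} F"
    unfolding F_def
    by (rule L2_integral_mult_borel_L2R[OF f _ integrable_resolvent_kernel_square[OF \<alpha> \<eta> nondeg]]) simp
  then have r: "L2 {p..q} r"
    unfolding r_def by (intro L2_add L2_cmult L2f1 f3)
  have r_eq: "of_real k * r x = - \<beta> * f1 x + of_real (Cfrak \<alpha>) * F x - of_real \<rho> * f3 x" for x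
    using k by (simp add: r_def field_simps)
  show ?thesis
  proof (rule that[OF L2_imp_absolutely_integrable[OF r]])
    fix u g
    assume "has_ac_deriv p q u g" "has_ac_deriv p q g (\<lambda>x. string_coeff \<rho> k \<alpha> \<eta> lam * u x + r x)"
    from string_solution_if_ode_solution[OF \<rho> k \<alpha> \<eta> nondeg _ L2f1 _ f ae r _ this] g1
    show "\<exists>U \<phi>. string_solution \<rho> k p q \<alpha> \<eta> lam f1 f3 f5 u g U \<phi>"
      using r_eq unfolding \<beta>_def F_def has_weak_deriv_iff by blast
  qed
qed

lemma resolvent_surjective_if_nondegenerate:
  fixes \<rho>1 \<rho>2 k1 k2 L \<alpha> \<eta> lam :: real
  assumes \<rho>: "\<rho>1 > 0" "\<rho>2 > 0" and k: "k1 > 0" "k2 > 0" and L: "L > 0"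
    and \<alpha>: "0 < \<alpha>" "\<alpha> < 1" and \<eta>: "0 \<le> \<eta>" and nondeg: "lam \<noteq> 0 \<or> 0 < \<eta>"
  shows "resolvent_surjective \<rho>1 \<rho>2 k1 k2 L \<alpha> \<eta> lam"
  unfolding resolvent_surjective_def
proof (intro allI impI)
  fix f1 f2 f3 f4 :: "real \<Rightarrow> complex" and f5 f6 :: "real \<Rightarrow> real \<Rightarrow> complex"
  assume f: "in_H L f1 f2 f3 f4 f5 f6"
  then have f_left: "H1 (-L) 0 f1" "L2 {-L..0} f3" "L2R {-L..0} f5"
    and f_right: "H1 0 L f2" "L2 {0..L} f4" "L2R {0..L} f6"
    unfolding in_H_def H10_def by auto
  obtain r1 where r1: "r1 absolutely_integrable_on {-L..0}"
    and left: "\<And>u g. has_ac_deriv (-L) 0 u g \<Longrightarrow> has_ac_deriv (-L) 0 g (\<lambda>x. string_coeff \<rho>1 k1 \<alpha> \<eta> lam * u x + r1 x) \<Longrightarrow>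
      \<exists>U \<phi>. string_solution \<rho>1 k1 (-L) 0 \<alpha> \<eta> lam f1 f3 f5 u g U \<phi>"
    using string_ode_reduction[OF \<rho>(1) k(1) \<alpha> \<eta> nondeg f_left] by blast
  obtain r2 where r2: "r2 absolutely_integrable_on {0..L}"
    and right: "\<And>v g. has_ac_deriv 0 L v g \<Longrightarrow> has_ac_deriv 0 L g (\<lambda>x. string_coeff \<rho>2 k2 \<alpha> \<eta> lam * v x + r2 x) \<Longrightarrow>
      \<exists>V \<phi>. string_solution \<rho>2 k2 0 L \<alpha> \<eta> lam f2 f4 f6 v g V \<phi>"
    using string_ode_reduction[OF \<rho>(2) k(2) \<alpha> \<eta> nondeg f_right] by blast
  obtain u g1 v g2 where u: "has_ac_deriv (-L) 0 u g1" "has_ac_deriv (-L) 0 g1 (\<lambda>x. string_coeff \<rho>1 k1 \<alpha> \<eta> lam * u x + r1 x)"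
    and v: "has_ac_deriv 0 L v g2" "has_ac_deriv 0 L g2 (\<lambda>x. string_coeff \<rho>2 k2 \<alpha> \<eta> lam * v x + r2 x)"
    and bc: "u (-L) = 0" "v L = 0" "u 0 = v 0" "of_real k1 * g1 0 = of_real k2 * g2 0"
    using transmission_problem_solvable[OF k L string_coeffs_nondegenerate[OF k \<alpha> \<eta> nondeg] r1 r2]
    by blast
  obtain U \<phi>1 where sol1: "string_solution \<rho>1 k1 (-L) 0 \<alpha> \<eta> lam f1 f3 f5 u g1 U \<phi>1"
    using left[OF u] by blast
  obtain V \<phi>2 where sol2: "string_solution \<rho>2 k2 0 L \<alpha> \<eta> lam f2 f4 f6 v g2 V \<phi>2"
    using right[OF v] by blast
  show "\<exists>u v U V \<phi>1 \<phi>2. resolvent_solution \<rho>1 \<rho>2 k1 k2 L \<alpha> \<eta> lam f1 f2 f3 f4 f5 f6 u v U V \<phi>1 \<phi>2"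
    using resolvent_solution_if_string_solutions[OF f L sol1 sol2 bc] by blast
qed

theorem proposition4p5:
  fixes \<rho>1 \<rho>2 k1 k2 L \<alpha> \<eta> :: real
  assumes "\<rho>1 > 0" "\<rho>2 > 0" "k1 > 0" "k2 > 0" "L > 0"
    and "0 < \<alpha>" "\<alpha> < 1" and "\<eta> \<ge> 0"
  shows "(\<eta> = 0 \<longrightarrow> (\<forall>lam::real. lam \<noteq> 0 \<longrightarrow> resolvent_surjective \<rho>1 \<rho>2 k1 k2 L \<alpha> \<eta> lam)) \<and>
         (\<eta> > 0 \<longrightarrow> (\<forall>lam::real. resolvent_surjective \<rho>1 \<rho>2 k1 k2 L \<alpha> \<eta> lam))"
  using resolvent_surjective_if_nondegenerate[OF assms] by blast

end
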